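(* Let $\sigma$ be any feasible non-anticipative online admission policy for the single-resource admission control model described in the context, and let $x^\sigma_t\in[0,1]$ be the admission probability it prescribes at time $t$ (equal to $0$ whenever no unit is available). Then $$\mathsf{FLU}\;\ge\;\liminf_{T\to\infty}\frac1T\,\mathbb E_\sigma\!\left[\int_0^T \lambda\, g(x^\sigma_t)\,dt\right].$$
   Context: Model: a single reusable resource has $c\in\mathbb N$ identical units. Customers arrive according to a Poisson process of rate $\lambda>0$. Over continuous time the decision-maker chooses an admission probability $x(t)\in[0,1]$, which may depend on the whole history (number of available units, how long each unavailable unit has been in use, etc.) but not on the future; when no unit is available, $x(t)=0$. An arriving customer is admitted with probability $x(t)$ (so admissions occur at rate $\lambda x(t)$ while stock is available); an admitted customer occupies one unit for a usage duration drawn i.i.d. from a distribution $G$ with $G(0)=0$ and finite mean $d>0$, independent of everything else; service is non-preemptive and the realized duration is not known until it ends. The instantaneous reward rate is $\lambda g(x(t))$, where $g:[0,1]\to\mathbb R$ is concave, non-decreasing and continuous with $g(0)=0$. Assume $x^*:=c/(\lambda d)<1$. The fluid relaxation value is $\mathsf{FLU}=\max\{\lambda g(x): x\in[0,1],\ \lambda x d\le c\}=\lambda g(x^* )$. *)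

theory Defs
  imports "HOL-Probability.Probability"
begin

text \<open>Primitive randomness on a
probability space M: inter-arrival gaps gap k (the arrival process is Poisson),
randomisation variables U k (customer k is admitted iff U k \<le> x at its arrival),
and potential usage durations S k (used only if customer k is admitted).\<close>

definition arrival :: "(nat \<Rightarrow> 'a \<Rightarrow> real) \<Rightarrow> nat \<Rightarrow> 'a \<Rightarrow> real" where
  "arrival gap k \<omega> = (\<Sum>i\<le>k. gap i \<omega>)"

definition observables ::
  "(nat \<Rightarrow> 'a \<Rightarrow> real) \<Rightarrow> (nat \<Rightarrow> 'a \<Rightarrow> real) \<Rightarrow> (nat \<Rightarrow> 'a \<Rightarrow> real) \<Rightarrow> real \<Rightarrow> ('a \<Rightarrow> real) set" where
  "observables gap U S s = (\<Union>k.
     {(\<lambda>\<omega>. if arrival gap k \<omega> \<le> s then 1 else 0),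
      (\<lambda>\<omega>. if arrival gap k \<omega> \<le> s then arrival gap k \<omega> else 0),
      (\<lambda>\<omega>. if arrival gap k \<omega> \<le> s then U k \<omega> else 0),
      (\<lambda>\<omega>. if arrival gap k \<omega> \<le> s then min (S k \<omega>) (s - arrival gap k \<omega>) else 0)})"

definition history ::
  "'a measure \<Rightarrow> (nat \<Rightarrow> 'a \<Rightarrow> real) \<Rightarrow> (nat \<Rightarrow> 'a \<Rightarrow> real) \<Rightarrow> (nat \<Rightarrow> 'a \<Rightarrow> real) \<Rightarrow> real \<Rightarrow> 'a measure" where
  "history M gap U S s = sigma (space M)
     {f -` B \<inter> space M | f B. f \<in> observables gap U S s \<and> B \<in> sets borel}"

definition predictable ::
  "'a measure \<Rightarrow> (real \<Rightarrow> 'a measure) \<Rightarrow> (real \<times> 'a) measure" where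
  "predictable M F = sigma ({0..} \<times> space M)
     ({{s<..t} \<times> A | s t A. 0 \<le> s \<and> s \<le> t \<and> A \<in> sets (F s)} \<union>
      {{0} \<times> A | A. A \<in> sets (F 0)})"

definition admitted ::
  "(nat \<Rightarrow> 'a \<Rightarrow> real) \<Rightarrow> (nat \<Rightarrow> 'a \<Rightarrow> real) \<Rightarrow> (real \<Rightarrow> 'a \<Rightarrow> real) \<Rightarrow> nat \<Rightarrow> 'a \<Rightarrow> bool" where
  "admitted gap U x k \<omega> \<longleftrightarrow> U k \<omega> \<le> x (arrival gap k \<omega>) \<omega>"

definition busy ::
  "(nat \<Rightarrow> 'a \<Rightarrow> real) \<Rightarrow> (nat \<Rightarrow> 'a \<Rightarrow> real) \<Rightarrow> (nat \<Rightarrow> 'a \<Rightarrow> real) \<Rightarrow> (real \<Rightarrow> 'a \<Rightarrow> real) \<Rightarrow> real \<Rightarrow> 'a \<Rightarrow> nat" where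
  "busy gap U S x t \<omega> = card {k. admitted gap U x k \<omega> \<and> arrival gap k \<omega> < t \<and> t < arrival gap k \<omega> + S k \<omega>}"

definition feasible_policy ::
  "'a measure \<Rightarrow> nat \<Rightarrow> (nat \<Rightarrow> 'a \<Rightarrow> real) \<Rightarrow> (nat \<Rightarrow> 'a \<Rightarrow> real) \<Rightarrow> (nat \<Rightarrow> 'a \<Rightarrow> real) \<Rightarrow> (real \<Rightarrow> 'a \<Rightarrow> real) \<Rightarrow> bool" where
  "feasible_policy M c gap U S x \<longleftrightarrow>
     (\<lambda>(t, \<omega>). x t \<omega>) \<in> borel_measurable (predictable M (history M gap U S)) \<and>
     (\<forall>t\<ge>0. \<forall>\<omega>\<in>space M. 0 \<le> x t \<omega> \<and> x t \<omega> \<le> 1) \<and>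
     (AE \<omega> in M. \<forall>t\<ge>0. c \<le> busy gap U S x t \<omega> \<longrightarrow> x t \<omega> = 0)"

definition FLU :: "real \<Rightarrow> real \<Rightarrow> nat \<Rightarrow> (real \<Rightarrow> real) \<Rightarrow> real" where
  "FLU lam d c g = Sup ((\<lambda>y. lam * g y) ` {y \<in> {0..1}. lam * y * d \<le> real c})"

end

theory Submission
  imports Defs
begin

text \<open>Cut the time axis at the arrival epochs.  On the \<open>k\<close>-th inter-arrival interval the
predictable policy is a measurable function of time and of the data of the first \<open>k\<close>
customers, and the \<open>k\<close>-th gap is exponential and independent of those data; by memorylessness
the expectation of any such quantity evaluated at the \<open>k\<close>-th arrival is \<open>\<lambda>\<close> times its
expected time integral over the \<open>k\<close>-th interval.  Since the admission variable and the usage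
duration of customer \<open>k\<close> are independent of the past as well, this gives
\<open>\<lambda> \<cdot> E[\<integral> x(t) dt over [0, T - L]] \<cdot> E[min(S, L)] \<le> E[time units are used in [0, T]] \<le> c T\<close>,
the last step because at most \<open>c\<close> units are ever busy.  Letting \<open>L \<rightarrow> \<infinity>\<close>, the long-run
average admission probability is at most \<open>x* = c / (\<lambda> d)\<close>; a line lying above the concave,
non-decreasing \<open>g\<close> on \<open>[0, 1]\<close> and close to \<open>g(x*)\<close> at \<open>x*\<close> converts this into the bound
on the average reward.\<close>

lemma measurable_pair_lborel_iff:
  "measurable (N \<Otimes>\<^sub>M lborel) K = measurable (N \<Otimes>\<^sub>M borel) K"
  "measurable (lborel \<Otimes>\<^sub>M N) K = measurable (borel \<Otimes>\<^sub>M N) K"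
  by (rule measurable_cong_sets; auto intro: sets_pair_measure_cong)+

lemma suminf_one_ennreal: "(\<Sum>k::nat. (1::ennreal)) = top"
proof -
  have "\<not> summable (\<lambda>_::nat. (1::real))" by (simp add: summable_const_iff)
  then have "(\<Sum>k::nat. ennreal 1) = top" by (intro summable_iff_suminf_neq_top) auto
  then show ?thesis by simp
qed

lemma SUP_ennreal_min_real_nat: "(SUP n::nat. ennreal (min s (real n))) = ennreal s"
proof (rule antisym)
  show "(SUP n::nat. ennreal (min s (real n))) \<le> ennreal s" by (intro SUP_least ennreal_leI) auto
  obtain n :: nat where "s \<le> real n" using real_arch_simple by blast
  then have "ennreal s = ennreal (min s (real n))" by simp
  also have "\<dots> \<le> (SUP n::nat. ennreal (min s (real n)))" by (rule SUP_upper) simp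
  finally show "ennreal s \<le> (SUP n::nat. ennreal (min s (real n)))" .
qed

lemma integral_le_enn2real_nn_integral:
  fixes f :: "'b \<Rightarrow> real"
  assumes "\<And>x. x \<in> space N \<Longrightarrow> 0 \<le> f x"
  shows "integral\<^sup>L N f \<le> enn2real (\<integral>\<^sup>+x. ennreal (f x) \<partial>N)"
proof (cases "integrable N f")
  case True
  then have "(\<integral>\<^sup>+x. ennreal (f x) \<partial>N) = ennreal (integral\<^sup>L N f)"
    using assms by (intro nn_integral_eq_integral) auto
  moreover have "0 \<le> integral\<^sup>L N f" using assms by (intro integral_nonneg_AE AE_I2) auto
  ultimately show ?thesis by simp
next
  case False
  then show ?thesis by (simp add: not_integrable_integral_eq)
qed

lemma borel_measurable_nn_integral_window:
  fixes f :: "'b \<times> real \<Rightarrow> ennreal"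
  assumes [measurable]: "l \<in> borel_measurable N" "r \<in> borel_measurable N" "f \<in> borel_measurable (N \<Otimes>\<^sub>M borel)"
  shows "(\<lambda>y. \<integral>\<^sup>+t. indicator {l y<..<r y} t * f (y, t) \<partial>lborel) \<in> borel_measurable N"
proof (rule lborel.borel_measurable_nn_integral)
  have "(\<lambda>q. if l (fst q) < snd q \<and> snd q < r (fst q) then f q else 0) \<in> borel_measurable (N \<Otimes>\<^sub>M borel)"
    by measurable
  then show "(\<lambda>(y, t). indicator {l y<..<r y} t * f (y, t)) \<in> borel_measurable (N \<Otimes>\<^sub>M lborel)"
    unfolding measurable_pair_lborel_iff by (rule measurable_cong[THEN iffD1, rotated]) (auto simp: indicator_def)
qed

lemma (in prob_space) nn_integral_indep_var:
  assumes ind: "indep_var N V N' Y" and F[measurable]: "F \<in> borel_measurable (N \<Otimes>\<^sub>M N')"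
  shows "(\<integral>\<^sup>+\<omega>. F (V \<omega>, Y \<omega>) \<partial>M) = (\<integral>\<^sup>+\<omega>. (\<integral>\<^sup>+y. F (V \<omega>, y) \<partial>distr M N' Y) \<partial>M)"
proof -
  from ind[unfolded indep_var_distribution_eq] have
    V[measurable]: "V \<in> measurable M N" and Y[measurable]: "Y \<in> measurable M N'" and
    eq: "distr M N V \<Otimes>\<^sub>M distr M N' Y = distr M (N \<Otimes>\<^sub>M N') (\<lambda>x. (V x, Y x))" by auto
  interpret PY: prob_space "distr M N' Y" by (rule prob_space_distr) simp
  interpret PV: prob_space "distr M N V" by (rule prob_space_distr) simp
  interpret pair_sigma_finite "distr M N V" "distr M N' Y" ..
  have "(\<integral>\<^sup>+\<omega>. F (V \<omega>, Y \<omega>) \<partial>M) = integral\<^sup>N (distr M (N \<Otimes>\<^sub>M N') (\<lambda>x. (V x, Y x))) F"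
    by (subst nn_integral_distr) auto
  also have "\<dots> = integral\<^sup>N (distr M N V \<Otimes>\<^sub>M distr M N' Y) F" by (simp add: eq)
  also have "\<dots> = (\<integral>\<^sup>+v. \<integral>\<^sup>+y. F (v, y) \<partial>distr M N' Y \<partial>distr M N V)"
    by (subst PY.nn_integral_fst[symmetric]) auto
  also have "\<dots> = (\<integral>\<^sup>+\<omega>. (\<integral>\<^sup>+y. F (V \<omega>, y) \<partial>distr M N' Y) \<partial>M)"
    by (subst nn_integral_distr) (auto intro!: PY.borel_measurable_nn_integral_fst)
  finally show ?thesis .
qed

text \<open>The line through \<open>(q, g q)\<close> parallel to the chord over \<open>[p, q]\<close> lies above \<open>g\<close> outside
\<open>[p, q]\<close> and at most \<open>g q - g p\<close> below it on \<open>[p, q]\<close>.\<close>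

lemma concave_mono_le_chord_line:
  fixes g :: "real \<Rightarrow> real"
  assumes conc: "concave_on {0..1} g" and mono: "mono_on {0..1} g"
    and pq: "0 \<le> p" "p < q" "q \<le> 1" and y: "0 \<le> y" "y \<le> 1"
  shows "g y \<le> g q + ((g q - g p) / (q - p)) * (y - q) + (g q - g p)"
proof -
  define \<mu> where "\<mu> = (g q - g p) / (q - p)"
  have cv: "convex_on {0..1} (\<lambda>x. - g x)" using conc by (simp add: concave_on_def)
  have \<mu>0: "0 \<le> \<mu>" using mono pq unfolding \<mu>_def mono_on_def by (auto intro!: divide_nonneg_pos)
  have \<mu>d: "\<mu> * (q - p) = g q - g p" using pq by (simp add: \<mu>_def)
  consider "y < p" | "p \<le> y \<and> y \<le> q" | "q < y" by linarith
  then show ?thesis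
  proof cases
    case 1
    have "((- g y) - (- g q)) / (y - q) \<le> ((- g p) - (- g q)) / (p - q)"
      using convex_on_slope_le(2)[OF cv, of y q p] 1 pq y by auto
    moreover have "((- g y) - (- g q)) / (y - q) = - ((g q - g y) / (q - y))"
      by (subst divide_minus_right[symmetric]) simp
    moreover have "((- g p) - (- g q)) / (p - q) = - ((g q - g p) / (q - p))"
      by (subst divide_minus_right[symmetric]) simp
    ultimately have "\<mu> \<le> (g q - g y) / (q - y)" unfolding \<mu>_def by linarith
    then have "\<mu> * (q - y) \<le> g q - g y" using 1 pq by (simp add: pos_le_divide_eq)
    moreover have "0 \<le> \<mu> * (q - p)" using \<mu>0 pq by simp
    ultimately show ?thesis using \<mu>d unfolding \<mu>_def[symmetric] by (simp add: algebra_simps)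
  next
    case 2
    then have "g y \<le> g q" using mono pq y unfolding mono_on_def by auto
    moreover have "0 \<le> \<mu> * (y - p)" using 2 \<mu>0 by simp
    ultimately show ?thesis using \<mu>d unfolding \<mu>_def[symmetric] by (simp add: algebra_simps)
  next
    case 3
    have "((- g p) - (- g q)) / (p - q) \<le> ((- g q) - (- g y)) / (q - y)"
      using convex_on_slope_le[OF cv, of p y q] 3 pq y by auto
    moreover have "((- g p) - (- g q)) / (p - q) = - ((g q - g p) / (q - p))"
      by (subst divide_minus_right[symmetric]) simp
    moreover have "((- g q) - (- g y)) / (q - y) = - ((g y - g q) / (y - q))"
      by (subst divide_minus_right[symmetric]) simp
    ultimately have "(g y - g q) / (y - q) \<le> \<mu>" unfolding \<mu>_def by linarith
    then have "g y - g q \<le> \<mu> * (y - q)" using 3 by (simp add: pos_divide_le_eq)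
    moreover have "0 \<le> \<mu> * (q - p)" using \<mu>0 pq by simp
    ultimately show ?thesis using \<mu>d unfolding \<mu>_def[symmetric] by linarith
  qed
qed

subsection \<open>Memorylessness of the exponential law\<close>

abbreviation exp_law :: "real \<Rightarrow> real measure" where
  "exp_law l \<equiv> density lborel (\<lambda>x. ennreal (exponential_density l x))"

lemma exp_law_tail:
  assumes l: "0 < l" and u: "0 \<le> u"
  shows "emeasure (exp_law l) {u<..} = ennreal (exp (- u * l))"
proof -
  interpret E: prob_space "exp_law l" by (rule prob_space_exponential_density[OF l])
  have "distributed (exp_law l) lborel (\<lambda>y. y) (exponential_density l)"
    unfolding distributed_def by (auto simp: distr_id2 exponential_density_def)
  from E.exponential_distributedD_gt[OF this u l]
  have "E.prob {y. u < y} = exp (- u * l)" by simp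
  then show ?thesis by (simp add: E.emeasure_eq_measure greaterThan_def)
qed

lemma nn_integral_exp_law_interval:
  fixes h :: "real \<Rightarrow> ennreal"
  assumes l: "0 < l" and h[measurable]: "h \<in> borel_measurable borel"
  shows "(\<integral>\<^sup>+y. (\<integral>\<^sup>+t. indicator {A<..<A+y} t * h t \<partial>lborel) \<partial>exp_law l) =
         (\<integral>\<^sup>+t. (h t * indicator {A<..} t) * ennreal (exp (- (t - A) * l)) \<partial>lborel)"
proof -
  let ?e = "\<lambda>x. ennreal (exponential_density l x)"
  have e_meas[measurable]: "?e \<in> borel_measurable borel"
    unfolding exponential_density_def by measurable
  have window[measurable]: "(\<lambda>(y, t). indicator {A<..<A+y} t * h t) \<in> borel_measurable (borel \<Otimes>\<^sub>M borel)"
  proof -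
    have "(\<lambda>p::real\<times>real. if A < snd p \<and> snd p < A + fst p then h (snd p) else 0) \<in> borel_measurable (borel \<Otimes>\<^sub>M borel)"
      by measurable
    then show ?thesis by (rule measurable_cong[THEN iffD1, rotated]) (auto simp: indicator_def)
  qed
  have "(\<integral>\<^sup>+y. (\<integral>\<^sup>+t. indicator {A<..<A+y} t * h t \<partial>lborel) \<partial>exp_law l) =
        (\<integral>\<^sup>+y. (\<integral>\<^sup>+t. ?e y * (indicator {A<..<A+y} t * h t) \<partial>lborel) \<partial>lborel)"
    by (subst nn_integral_density)
       (auto intro!: lborel.borel_measurable_nn_integral nn_integral_cong nn_integral_cmult[symmetric]
             simp: measurable_pair_lborel_iff split_beta')
  also have "\<dots> = (\<integral>\<^sup>+t. (\<integral>\<^sup>+y. ?e y * (indicator {A<..<A+y} t * h t) \<partial>lborel) \<partial>lborel)"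
    by (rule lborel_pair.Fubini'[symmetric]) (simp add: measurable_pair_lborel_iff split_beta')
  also have "\<dots> = (\<integral>\<^sup>+t. (h t * indicator {A<..} t) * (\<integral>\<^sup>+y. indicator {t - A<..} y \<partial>exp_law l) \<partial>lborel)"
  proof (rule nn_integral_cong)
    fix t :: real
    have "(\<integral>\<^sup>+y. ?e y * (indicator {A<..<A+y} t * h t) \<partial>lborel) =
          (\<integral>\<^sup>+y. (h t * indicator {A<..} t) * (?e y * indicator {t - A<..} y) \<partial>lborel)"
      by (rule nn_integral_cong) (auto simp: indicator_def mult_ac)
    also have "\<dots> = (h t * indicator {A<..} t) * (\<integral>\<^sup>+y. ?e y * indicator {t - A<..} y \<partial>lborel)"
      by (rule nn_integral_cmult) simp
    also have "(\<integral>\<^sup>+y. ?e y * indicator {t - A<..} y \<partial>lborel) = (\<integral>\<^sup>+y. indicator {t - A<..} y \<partial>exp_law l)"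
      by (subst nn_integral_density) auto
    finally show "(\<integral>\<^sup>+y. ?e y * (indicator {A<..<A+y} t * h t) \<partial>lborel) =
          (h t * indicator {A<..} t) * (\<integral>\<^sup>+y. indicator {t - A<..} y \<partial>exp_law l)" .
  qed
  also have "\<dots> = (\<integral>\<^sup>+t. (h t * indicator {A<..} t) * ennreal (exp (- (t - A) * l)) \<partial>lborel)"
  proof (intro nn_integral_cong)
    fix t :: real
    show "(h t * indicator {A<..} t) * (\<integral>\<^sup>+y. indicator {t - A<..} y \<partial>exp_law l) =
          (h t * indicator {A<..} t) * ennreal (exp (- (t - A) * l))"
      by (cases "A < t") (use exp_law_tail[OF l, of "t - A"] in auto)
  qed
  finally show ?thesis .
qed

lemma nn_integral_exp_law_shift:
  fixes h :: "real \<Rightarrow> ennreal"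
  assumes l: "0 < l" and h[measurable]: "h \<in> borel_measurable borel"
  shows "(\<integral>\<^sup>+y. h (A + y) \<partial>exp_law l) =
         l * (\<integral>\<^sup>+y. (\<integral>\<^sup>+t. indicator {A<..<A+y} t * h t \<partial>lborel) \<partial>exp_law l)"
proof -
  let ?e = "\<lambda>x. ennreal (exponential_density l x)"
  have [measurable]: "?e \<in> borel_measurable borel"
    unfolding exponential_density_def by measurable
  have "(\<integral>\<^sup>+y. h (A + y) \<partial>exp_law l) = (\<integral>\<^sup>+y. ?e ((A + y) - A) * h (A + y) \<partial>lborel)"
    by (subst nn_integral_density) auto
  also have "\<dots> = (\<integral>\<^sup>+t. ?e (t - A) * h t \<partial>lborel)"
    by (subst lborel_distr_plus[of A, symmetric], subst nn_integral_distr) auto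
  also have "\<dots> = (\<integral>\<^sup>+t. l * ((h t * indicator {A<..} t) * ennreal (exp (- (t - A) * l))) \<partial>lborel)"
  proof (rule nn_integral_cong_AE)
    show "AE t in lborel. ?e (t - A) * h t = l * ((h t * indicator {A<..} t) * ennreal (exp (- (t - A) * l)))"
      using AE_lborel_singleton[of A]
    proof (rule AE_mp, intro AE_I2 impI)
      fix t :: real assume "t \<noteq> A"
      then show "?e (t - A) * h t = l * ((h t * indicator {A<..} t) * ennreal (exp (- (t - A) * l)))"
        using l by (cases "A < t") (auto simp: exponential_density_def ennreal_mult' mult_ac)
    qed
  qed
  also have "\<dots> = l * (\<integral>\<^sup>+t. (h t * indicator {A<..} t) * ennreal (exp (- (t - A) * l)) \<partial>lborel)"
    by (rule nn_integral_cmult) simp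
  finally show ?thesis by (simp add: nn_integral_exp_law_interval[OF l h])
qed

subsection \<open>Arrival epochs\<close>

locale arrival_model =
  fixes M :: "'a measure" and lam :: real and gap U S :: "nat \<Rightarrow> 'a \<Rightarrow> real"
  assumes M: "prob_space M"
    and lam: "lam > 0"
    and gap_exp: "\<And>k. distributed M lborel (gap k) (exponential_density lam)"
    and U_meas: "\<And>k. U k \<in> borel_measurable M"
    and S_meas: "\<And>k. S k \<in> borel_measurable M"
    and indep: "prob_space.indep_vars M (\<lambda>_. borel)
                  (\<lambda>i. case i of Inl k \<Rightarrow> gap k | Inr (Inl k) \<Rightarrow> U k | Inr (Inr k) \<Rightarrow> S k) UNIV"
begin

sublocale prob_space M by (rule M)

definition prim :: "nat + nat + nat \<Rightarrow> 'a \<Rightarrow> real" where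
  "prim = (\<lambda>i. case i of Inl k \<Rightarrow> gap k | Inr (Inl k) \<Rightarrow> U k | Inr (Inr k) \<Rightarrow> S k)"

definition past_idx :: "nat \<Rightarrow> (nat + nat + nat) set" where
  "past_idx k = {Inl i|i. i<k} \<union> {Inr (Inl i)|i. i<k} \<union> {Inr (Inr i)|i. i<k}"

definition past :: "nat \<Rightarrow> 'a \<Rightarrow> (nat + nat + nat \<Rightarrow> real)" where
  "past k \<omega> = restrict (\<lambda>i. prim i \<omega>) (past_idx k)"

abbreviation past_space :: "nat \<Rightarrow> (nat + nat + nat \<Rightarrow> real) measure" where
  "past_space k \<equiv> PiM (past_idx k) (\<lambda>_. borel)"

text \<open>The \<open>k\<close>-th inter-arrival interval is \<open>(prev_arrival k, a k]\<close>, with \<open>prev_arrival 0 = 0\<close>.\<close>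

definition prev_arrival :: "nat \<Rightarrow> 'a \<Rightarrow> real" where
  "prev_arrival k \<omega> = (\<Sum>i<k. gap i \<omega>)"

abbreviation a :: "nat \<Rightarrow> 'a \<Rightarrow> real" where
  "a \<equiv> arrival gap"

definition pos_gap_paths :: "'a set" where
  "pos_gap_paths = {\<omega>\<in>space M. \<forall>i. 0 < gap i \<omega>}"

lemma gap_measurable[measurable]: "gap k \<in> borel_measurable M"
  using distributed_measurable[OF gap_exp[of k]] by simp

lemma prim_measurable[measurable]: "prim i \<in> borel_measurable M"
  by (cases i rule: sum.exhaust) (auto simp: prim_def U_meas S_meas split: sum.split)

lemma arrival_eq: "a k \<omega> = prev_arrival k \<omega> + gap k \<omega>"
  by (simp add: arrival_def prev_arrival_def lessThan_Suc_atMost[symmetric])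

lemma arrival_measurable[measurable]: "a k \<in> borel_measurable M"
  unfolding arrival_def by measurable

lemma prev_arrival_measurable[measurable]: "prev_arrival k \<in> borel_measurable M"
  unfolding prev_arrival_def by measurable

lemma pos_gap_paths_subset: "pos_gap_paths \<subseteq> space M" by (auto simp: pos_gap_paths_def)

lemma gap_pos_AE: "AE \<omega> in M. 0 < gap i \<omega>"
proof -
  have "\<P>(\<omega> in M. 0 < gap i \<omega>) = exp (- 0 * lam)"
    by (rule exponential_distributedD_gt[OF gap_exp]) (use lam in auto)
  then have "prob {\<omega>\<in>space M. 0 < gap i \<omega>} = 1" by simp
  then have "AE \<omega> in M. \<omega> \<in> {\<omega>\<in>space M. 0 < gap i \<omega>}" by (rule AE_prob_1)
  then show ?thesis by auto
qed

lemma AE_pos_gap_paths: "AE \<omega> in M. \<omega> \<in> pos_gap_paths"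
proof -
  have "AE \<omega> in M. \<forall>i. 0 < gap i \<omega>" using gap_pos_AE by (simp add: AE_all_countable)
  then show ?thesis by (auto simp: pos_gap_paths_def)
qed

lemma prev_arrival_nonneg: "\<omega> \<in> pos_gap_paths \<Longrightarrow> 0 \<le> prev_arrival k \<omega>"
  unfolding prev_arrival_def pos_gap_paths_def by (auto intro!: sum_nonneg simp: less_imp_le)

lemma arrival_mono: "\<omega> \<in> pos_gap_paths \<Longrightarrow> k \<le> j \<Longrightarrow> a k \<omega> \<le> a j \<omega>"
  unfolding arrival_def pos_gap_paths_def by (intro sum_mono2) (auto simp: less_imp_le)

lemma arrival_pos: "\<omega> \<in> pos_gap_paths \<Longrightarrow> 0 < a k \<omega>"
  using prev_arrival_nonneg[of \<omega> k] by (auto simp: arrival_eq pos_gap_paths_def intro: add_nonneg_pos)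

lemma arrival_le_prev_arrival: "\<omega> \<in> pos_gap_paths \<Longrightarrow> k < j \<Longrightarrow> a k \<omega> \<le> prev_arrival j \<omega>"
  unfolding arrival_def prev_arrival_def pos_gap_paths_def by (intro sum_mono2) (auto simp: less_imp_le)

lemma arrival_strict_mono: "\<omega> \<in> pos_gap_paths \<Longrightarrow> k < j \<Longrightarrow> a k \<omega> < a j \<omega>"
proof -
  assume w: "\<omega> \<in> pos_gap_paths" and kj: "k < j"
  have "a k \<omega> \<le> prev_arrival j \<omega>" by (rule arrival_le_prev_arrival[OF w kj])
  also have "\<dots> < a j \<omega>" using w by (simp add: arrival_eq pos_gap_paths_def)
  finally show ?thesis .
qed

subsection \<open>Predictable processes are functions of the past\<close>

lemma past_measurable[measurable]: "past k \<in> measurable M (past_space k)"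
  unfolding past_def by (rule measurable_restrict) simp

lemma past_component_measurable: "i \<in> past_idx k \<Longrightarrow> (\<lambda>z. z i) \<in> borel_measurable (past_space k)"
  by (rule measurable_component_singleton)

definition past_arrival :: "nat \<Rightarrow> (nat + nat + nat \<Rightarrow> real) \<Rightarrow> real" where
  "past_arrival j z = (\<Sum>i\<le>j. z (Inl i))"

lemma past_arrival_measurable[measurable]: "j < k \<Longrightarrow> past_arrival j \<in> borel_measurable (past_space k)"
  unfolding past_arrival_def by (intro borel_measurable_sum past_component_measurable) (auto simp: past_idx_def)

lemma past_arrival_past: "j < k \<Longrightarrow> past_arrival j (past k \<omega>) = a j \<omega>"
  by (simp add: past_arrival_def past_def past_idx_def prim_def arrival_def)

definition past_prev_arrival :: "nat \<Rightarrow> (nat + nat + nat \<Rightarrow> real) \<Rightarrow> real" where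
  "past_prev_arrival k z = (\<Sum>i<k. z (Inl i))"

lemma past_prev_arrival_measurable[measurable]: "past_prev_arrival k \<in> borel_measurable (past_space k)"
  unfolding past_prev_arrival_def by (intro borel_measurable_sum past_component_measurable) (auto simp: past_idx_def)

lemma past_prev_arrival_past: "past_prev_arrival k (past k \<omega>) = prev_arrival k \<omega>"
  by (simp add: past_prev_arrival_def past_def past_idx_def prim_def prev_arrival_def)

lemma past_U: "j < k \<Longrightarrow> past k \<omega> (Inr (Inl j)) = U j \<omega>"
  by (simp add: past_def past_idx_def prim_def)

lemma past_S: "j < k \<Longrightarrow> past k \<omega> (Inr (Inr j)) = S j \<omega>"
  by (simp add: past_def past_idx_def prim_def)

lemma observable_factors_through_past:
  assumes f: "f \<in> observables gap U S s"
  shows "\<exists>\<psi>\<in>borel_measurable (past_space k). \<forall>\<omega>\<in>pos_gap_paths. s < a k \<omega> \<longrightarrow> f \<omega> = \<psi> (past k \<omega>)"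
proof -
  from f obtain j where fj:
    "f = (\<lambda>\<omega>. if a j \<omega> \<le> s then 1 else 0) \<or>
     f = (\<lambda>\<omega>. if a j \<omega> \<le> s then a j \<omega> else 0) \<or>
     f = (\<lambda>\<omega>. if a j \<omega> \<le> s then U j \<omega> else 0) \<or>
     f = (\<lambda>\<omega>. if a j \<omega> \<le> s then min (S j \<omega>) (s - a j \<omega>) else 0)"
    unfolding observables_def by blast
  show ?thesis
  proof (cases "j < k")
    case False
    have "\<forall>\<omega>\<in>pos_gap_paths. s < a k \<omega> \<longrightarrow> f \<omega> = 0"
    proof (intro ballI impI)
      fix \<omega> assume "\<omega> \<in> pos_gap_paths" "s < a k \<omega>"
      then have "s < a j \<omega>" using arrival_mono[of \<omega> k j] False by auto
      then show "f \<omega> = 0" using fj by auto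
    qed
    then show ?thesis by (intro bexI[of _ "\<lambda>_. 0"]) auto
  next
    case True
    note [measurable] = past_arrival_measurable[OF True] past_component_measurable[of "Inr (Inl j)" k] past_component_measurable[of "Inr (Inr j)" k]
    have J: "Inr (Inl j) \<in> past_idx k" "Inr (Inr j) \<in> past_idx k" using True by (auto simp: past_idx_def)
    from fj show ?thesis
    proof (elim disjE)
      assume f: "f = (\<lambda>\<omega>. if a j \<omega> \<le> s then 1 else 0)"
      show ?thesis
        by (rule bexI[of _ "\<lambda>z. if past_arrival j z \<le> s then 1 else 0"]) (auto simp: f past_arrival_past[OF True])
    next
      assume f: "f = (\<lambda>\<omega>. if a j \<omega> \<le> s then a j \<omega> else 0)"
      show ?thesis
        by (rule bexI[of _ "\<lambda>z. if past_arrival j z \<le> s then past_arrival j z else 0"]) (auto simp: f past_arrival_past[OF True])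
    next
      assume f: "f = (\<lambda>\<omega>. if a j \<omega> \<le> s then U j \<omega> else 0)"
      show ?thesis
        by (rule bexI[of _ "\<lambda>z. if past_arrival j z \<le> s then z (Inr (Inl j)) else 0"])
           (use J in \<open>auto simp: f past_arrival_past[OF True] past_U[OF True]\<close>)
    next
      assume f: "f = (\<lambda>\<omega>. if a j \<omega> \<le> s then min (S j \<omega>) (s - a j \<omega>) else 0)"
      show ?thesis
        by (rule bexI[of _ "\<lambda>z. if past_arrival j z \<le> s then min (z (Inr (Inr j))) (s - past_arrival j z) else 0"])
           (use J in \<open>auto simp: f past_arrival_past[OF True] past_S[OF True]\<close>)
    qed
  qed
qed

lemma sets_history:
  "sets (history M gap U S s) = sigma_sets (space M)
     {f -` B \<inter> space M | f B. f \<in> observables gap U S s \<and> B \<in> sets borel}"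
  unfolding history_def by (rule sets_measure_of) auto

lemma space_history: "space (history M gap U S s) = space M"
  unfolding history_def by (rule space_measure_of) auto

lemma history_set_factors_through_past:
  assumes "A \<in> sets (history M gap U S s)"
  shows "\<exists>A'\<in>sets (past_space k). \<forall>\<omega>\<in>pos_gap_paths. s < a k \<omega> \<longrightarrow> (\<omega> \<in> A \<longleftrightarrow> past k \<omega> \<in> A')"
  using assms unfolding sets_history
proof (induction rule: sigma_sets.induct)
  case (Basic A)
  then obtain f B where A: "A = f -` B \<inter> space M" and f: "f \<in> observables gap U S s" and B: "B \<in> sets borel"
    by blast
  from observable_factors_through_past[OF f, of k] obtain \<psi> where \<psi>: "\<psi> \<in> borel_measurable (past_space k)"
    "\<forall>\<omega>\<in>pos_gap_paths. s < a k \<omega> \<longrightarrow> f \<omega> = \<psi> (past k \<omega>)" by blast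
  show ?case
  proof (intro bexI[of _ "\<psi> -` B \<inter> space (past_space k)"] ballI impI)
    fix \<omega> assume "\<omega> \<in> pos_gap_paths" "s < a k \<omega>"
    moreover have "past k \<omega> \<in> space (past_space k)" using \<open>\<omega> \<in> pos_gap_paths\<close> pos_gap_paths_subset measurable_space[OF past_measurable] by blast
    ultimately show "(\<omega> \<in> A) = (past k \<omega> \<in> \<psi> -` B \<inter> space (past_space k))"
      using \<psi> pos_gap_paths_subset by (auto simp: A)
  qed (use \<psi> B in measurable)
next
  case Empty
  then show ?case by (intro bexI[of _ "{}"]) auto
next
  case (Compl A)
  then obtain A' where A': "A' \<in> sets (past_space k)" "\<forall>\<omega>\<in>pos_gap_paths. s < a k \<omega> \<longrightarrow> (\<omega> \<in> A \<longleftrightarrow> past k \<omega> \<in> A')" by blast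
  show ?case
  proof (intro bexI[of _ "space (past_space k) - A'"] ballI impI)
    fix \<omega> assume "\<omega> \<in> pos_gap_paths" "s < a k \<omega>"
    moreover have "past k \<omega> \<in> space (past_space k)" using \<open>\<omega> \<in> pos_gap_paths\<close> pos_gap_paths_subset measurable_space[OF past_measurable] by blast
    ultimately show "(\<omega> \<in> space M - A) = (past k \<omega> \<in> space (past_space k) - A')"
      using A' pos_gap_paths_subset by auto
  qed (use A' in auto)
next
  case (Union A)
  then have "\<forall>i. \<exists>A'\<in>sets (past_space k). \<forall>\<omega>\<in>pos_gap_paths. s < a k \<omega> \<longrightarrow> (\<omega> \<in> A i \<longleftrightarrow> past k \<omega> \<in> A')" by blast
  then obtain A' where A': "\<And>i. A' i \<in> sets (past_space k)" "\<And>i. \<forall>\<omega>\<in>pos_gap_paths. s < a k \<omega> \<longrightarrow> (\<omega> \<in> A i \<longleftrightarrow> past k \<omega> \<in> A' i)"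
    by metis
  show ?case
    by (intro bexI[of _ "\<Union>i. A' i"]) (use A' in auto)
qed

abbreviation predictable_history :: "(real \<times> 'a) measure" where "predictable_history \<equiv> predictable M (history M gap U S)"

lemma predictable_generators_subset:
  "{{s<..t} \<times> A | s t A. 0 \<le> s \<and> s \<le> t \<and> A \<in> sets (history M gap U S s)} \<union>
      {{0} \<times> A | A. A \<in> sets (history M gap U S 0)} \<subseteq> Pow ({0..} \<times> space M)"
  using sets.sets_into_space[where M="history M gap U S _", unfolded space_history] by fastforce

lemma sets_predictable: "sets predictable_history = sigma_sets ({0..} \<times> space M)
     ({{s<..t} \<times> A | s t A. 0 \<le> s \<and> s \<le> t \<and> A \<in> sets (history M gap U S s)} \<union>
      {{0} \<times> A | A. A \<in> sets (history M gap U S 0)})"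
  unfolding predictable_def by (rule sets_measure_of[OF predictable_generators_subset])

lemma space_predictable: "space predictable_history = {0..} \<times> space M"
  unfolding predictable_def by (rule space_measure_of[OF predictable_generators_subset])

lemma past_in_space: "\<omega> \<in> pos_gap_paths \<Longrightarrow> past k \<omega> \<in> space (past_space k)"
  using pos_gap_paths_subset measurable_space[OF past_measurable] by blast

lemma predictable_set_factors_through_past:
  assumes "E \<in> sets predictable_history"
  shows "\<exists>E'\<in>sets (borel \<Otimes>\<^sub>M past_space k). \<forall>\<omega>\<in>pos_gap_paths. \<forall>t. prev_arrival k \<omega> < t \<and> t \<le> a k \<omega> \<longrightarrow>
            ((t, \<omega>) \<in> E \<longleftrightarrow> (t, past k \<omega>) \<in> E')"
  using assms unfolding sets_predictable
proof (induction rule: sigma_sets.induct)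
  case (Basic E)
  then show ?case
  proof (elim UnE CollectE exE conjE)
    fix s t A assume E: "E = {s<..t} \<times> A" and st: "0 \<le> s" "s \<le> t" and A: "A \<in> sets (history M gap U S s)"
    from history_set_factors_through_past[OF A, of k] obtain A' where A': "A' \<in> sets (past_space k)"
      "\<forall>\<omega>\<in>pos_gap_paths. s < a k \<omega> \<longrightarrow> (\<omega> \<in> A \<longleftrightarrow> past k \<omega> \<in> A')" by blast
    show ?thesis
    proof (intro bexI[of _ "{s<..t} \<times> A'"] ballI allI impI)
      fix \<omega> t' assume "\<omega> \<in> pos_gap_paths" "prev_arrival k \<omega> < t' \<and> t' \<le> a k \<omega>"
      then show "((t', \<omega>) \<in> E) = ((t', past k \<omega>) \<in> {s<..t} \<times> A')"
        using A' by (auto simp: E)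
    qed (use A' in auto)
  next
    fix A assume E: "E = {0} \<times> A"
    show ?thesis
    proof (intro bexI[of _ "{}"] ballI allI impI)
      fix \<omega> t' assume "\<omega> \<in> pos_gap_paths" "prev_arrival k \<omega> < t' \<and> t' \<le> a k \<omega>"
      then show "((t', \<omega>) \<in> E) = ((t', past k \<omega>) \<in> {})"
        using prev_arrival_nonneg[of \<omega> k] by (auto simp: E)
    qed auto
  qed
next
  case Empty
  then show ?case by (intro bexI[of _ "{}"]) auto
next
  case (Compl E)
  then obtain E' where E': "E' \<in> sets (borel \<Otimes>\<^sub>M past_space k)" "\<forall>\<omega>\<in>pos_gap_paths. \<forall>t. prev_arrival k \<omega> < t \<and> t \<le> a k \<omega> \<longrightarrow>
            ((t, \<omega>) \<in> E \<longleftrightarrow> (t, past k \<omega>) \<in> E')" by blast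
  show ?case
  proof (intro bexI[of _ "space (borel \<Otimes>\<^sub>M past_space k) - E'"] ballI allI impI)
    fix \<omega> t assume w: "\<omega> \<in> pos_gap_paths" and t: "prev_arrival k \<omega> < t \<and> t \<le> a k \<omega>"
    have "0 \<le> t" using t prev_arrival_nonneg[OF w, of k] by auto
    then show "((t, \<omega>) \<in> {0..} \<times> space M - E) = ((t, past k \<omega>) \<in> space (borel \<Otimes>\<^sub>M past_space k) - E')"
      using E' w t past_in_space[OF w, of k] pos_gap_paths_subset by (auto simp: space_pair_measure)
  qed (use E' in auto)
next
  case (Union A)
  then have "\<forall>i. \<exists>E'\<in>sets (borel \<Otimes>\<^sub>M past_space k). \<forall>\<omega>\<in>pos_gap_paths. \<forall>t. prev_arrival k \<omega> < t \<and> t \<le> a k \<omega> \<longrightarrow>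
            ((t, \<omega>) \<in> A i \<longleftrightarrow> (t, past k \<omega>) \<in> E')" by blast
  then obtain E' where E': "\<And>i. E' i \<in> sets (borel \<Otimes>\<^sub>M past_space k)" "\<And>i. \<forall>\<omega>\<in>pos_gap_paths. \<forall>t. prev_arrival k \<omega> < t \<and> t \<le> a k \<omega> \<longrightarrow>
            ((t, \<omega>) \<in> A i \<longleftrightarrow> (t, past k \<omega>) \<in> E' i)"
    by metis
  show ?case
    by (intro bexI[of _ "\<Union>i. E' i"]) (use E' in auto)
qed

lemma predictable_fun_factors_through_past:
  fixes Y :: "real \<times> 'a \<Rightarrow> ennreal"
  assumes "Y \<in> borel_measurable predictable_history"
  shows "\<exists>h\<in>borel_measurable (borel \<Otimes>\<^sub>M past_space k). \<forall>\<omega>\<in>pos_gap_paths. \<forall>t. prev_arrival k \<omega> < t \<and> t \<le> a k \<omega> \<longrightarrow>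
            Y (t, \<omega>) = h (t, past k \<omega>)"
  using assms
proof (induction rule: borel_measurable_induct)
  case (cong f g)
  then obtain h where h: "h\<in>borel_measurable (borel \<Otimes>\<^sub>M past_space k)" "\<forall>\<omega>\<in>pos_gap_paths. \<forall>t. prev_arrival k \<omega> < t \<and> t \<le> a k \<omega> \<longrightarrow>
            g (t, \<omega>) = h (t, past k \<omega>)" by blast
  show ?case
  proof (intro bexI[OF _ h(1)] ballI allI impI)
    fix \<omega> t assume w: "\<omega> \<in> pos_gap_paths" and t: "prev_arrival k \<omega> < t \<and> t \<le> a k \<omega>"
    have "0 \<le> t" using t prev_arrival_nonneg[OF w, of k] by auto
    then have "(t, \<omega>) \<in> space predictable_history" using w pos_gap_paths_subset by (auto simp: space_predictable)
    then show "f (t, \<omega>) = h (t, past k \<omega>)" using cong(3) h(2) w t by auto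
  qed
next
  case (set A)
  from predictable_set_factors_through_past[OF set] obtain E' where E': "E'\<in>sets (borel \<Otimes>\<^sub>M past_space k)" "\<forall>\<omega>\<in>pos_gap_paths. \<forall>t. prev_arrival k \<omega> < t \<and> t \<le> a k \<omega> \<longrightarrow>
            ((t, \<omega>) \<in> A \<longleftrightarrow> (t, past k \<omega>) \<in> E')" by blast
  show ?case
    by (rule bexI[of _ "indicator E'"]) (use E' in \<open>auto simp: indicator_def\<close>)
next
  case (mult u c)
  then obtain h where h: "h\<in>borel_measurable (borel \<Otimes>\<^sub>M past_space k)" "\<forall>\<omega>\<in>pos_gap_paths. \<forall>t. prev_arrival k \<omega> < t \<and> t \<le> a k \<omega> \<longrightarrow>
            u (t, \<omega>) = h (t, past k \<omega>)" by blast
  show ?case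
    by (rule bexI[of _ "\<lambda>p. c * h p"]) (use h in auto)
next
  case (add u v)
  then obtain h h' where h: "h\<in>borel_measurable (borel \<Otimes>\<^sub>M past_space k)" "\<forall>\<omega>\<in>pos_gap_paths. \<forall>t. prev_arrival k \<omega> < t \<and> t \<le> a k \<omega> \<longrightarrow>
            u (t, \<omega>) = h (t, past k \<omega>)"
    and h': "h'\<in>borel_measurable (borel \<Otimes>\<^sub>M past_space k)" "\<forall>\<omega>\<in>pos_gap_paths. \<forall>t. prev_arrival k \<omega> < t \<and> t \<le> a k \<omega> \<longrightarrow>
            v (t, \<omega>) = h' (t, past k \<omega>)" by blast
  show ?case
    by (rule bexI[of _ "\<lambda>p. h' p + h p"]) (use h h' in auto)
next
  case (seq W)
  then have "\<forall>i. \<exists>h\<in>borel_measurable (borel \<Otimes>\<^sub>M past_space k). \<forall>\<omega>\<in>pos_gap_paths. \<forall>t. prev_arrival k \<omega> < t \<and> t \<le> a k \<omega> \<longrightarrow>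
            W i (t, \<omega>) = h (t, past k \<omega>)" by blast
  then obtain h where h: "\<And>i. h i \<in> borel_measurable (borel \<Otimes>\<^sub>M past_space k)" "\<And>i. \<forall>\<omega>\<in>pos_gap_paths. \<forall>t. prev_arrival k \<omega> < t \<and> t \<le> a k \<omega> \<longrightarrow>
            W i (t, \<omega>) = h i (t, past k \<omega>)" by metis
  show ?case
  proof (rule bexI[of _ "\<lambda>p. SUP i. h i p"], intro ballI allI impI)
    fix \<omega> t assume "\<omega> \<in> pos_gap_paths" "prev_arrival k \<omega> < t \<and> t \<le> a k \<omega>"
    then have "\<And>i. W i (t, \<omega>) = h i (t, past k \<omega>)" using h(2) by blast
    then show "(SUP i. W i) (t, \<omega>) = (SUP i. h i (t, past k \<omega>))"
      by (simp add: image_comp)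
  qed (use h in auto)
qed

lemma observables_measurable: "f \<in> observables gap U S s \<Longrightarrow> f \<in> borel_measurable M"
proof -
  assume "f \<in> observables gap U S s"
  then obtain j where fj:
    "f = (\<lambda>\<omega>. if a j \<omega> \<le> s then 1 else 0) \<or>
     f = (\<lambda>\<omega>. if a j \<omega> \<le> s then a j \<omega> else 0) \<or>
     f = (\<lambda>\<omega>. if a j \<omega> \<le> s then U j \<omega> else 0) \<or>
     f = (\<lambda>\<omega>. if a j \<omega> \<le> s then min (S j \<omega>) (s - a j \<omega>) else 0)"
    unfolding observables_def by blast
  have [measurable]: "U j \<in> borel_measurable M" "S j \<in> borel_measurable M" by (rule U_meas S_meas)+
  from fj show ?thesis by (elim disjE) simp_all
qed

lemma sets_history_subset: "sets (history M gap U S s) \<subseteq> sets M"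
  unfolding sets_history
  by (rule sets.sigma_sets_subset) (auto dest: observables_measurable)

lemma sets_predictable_subset: "sets predictable_history \<subseteq> sets (borel \<Otimes>\<^sub>M M)"
proof
  fix E assume "E \<in> sets predictable_history"
  then show "E \<in> sets (borel \<Otimes>\<^sub>M M)"
    unfolding sets_predictable
  proof (induction rule: sigma_sets.induct)
    case (Basic E)
    then show ?case using sets_history_subset by (auto intro!: pair_measureI)
  next
    case Empty then show ?case by simp
  next
    case (Compl E)
    have "{0::real..} \<times> space M \<in> sets (borel \<Otimes>\<^sub>M M)" by (intro pair_measureI) (auto intro: borel_closed[OF closed_atLeast])
    then show ?case using Compl by auto
  next
    case (Union A) then show ?case by auto
  qed
qed

subsection \<open>Expectations at arrival epochs\<close>

lemma indep_prim: "indep_vars (\<lambda>_. borel) prim UNIV"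
  using indep unfolding prim_def .

lemma indep_restrict_prim_single:
  assumes "j \<notin> A"
  shows "indep_var (PiM A (\<lambda>_. borel)) (\<lambda>\<omega>. restrict (\<lambda>i. prim i \<omega>) A)
          (PiM {j} (\<lambda>_. borel)) (\<lambda>\<omega>. restrict (\<lambda>i. prim i \<omega>) {j})"
    using assms by (intro indep_var_restrict[OF indep_prim]) auto

lemma nn_integral_indep_prim:
  assumes j: "j \<notin> A" and F[measurable]: "F \<in> borel_measurable (PiM A (\<lambda>_. borel) \<Otimes>\<^sub>M borel)"
  shows "(\<integral>\<^sup>+\<omega>. F (restrict (\<lambda>i. prim i \<omega>) A, prim j \<omega>) \<partial>M) =
         (\<integral>\<^sup>+\<omega>. (\<integral>\<^sup>+y. F (restrict (\<lambda>i. prim i \<omega>) A, y) \<partial>distr M borel (prim j)) \<partial>M)"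
proof -
  have cj[measurable]: "(\<lambda>f. f j) \<in> borel_measurable (PiM {j} (\<lambda>_. borel))"
    by (rule measurable_component_singleton) simp
  let ?G = "\<lambda>(v, y::nat+nat+nat \<Rightarrow> real). F (v, y j)"
  have G: "?G \<in> borel_measurable (PiM A (\<lambda>_. borel) \<Otimes>\<^sub>M PiM {j} (\<lambda>_. borel))" by measurable
  have "(\<integral>\<^sup>+\<omega>. F (restrict (\<lambda>i. prim i \<omega>) A, prim j \<omega>) \<partial>M) =
        (\<integral>\<^sup>+\<omega>. ?G (restrict (\<lambda>i. prim i \<omega>) A, restrict (\<lambda>i. prim i \<omega>) {j}) \<partial>M)" by simp
  also have "\<dots> = (\<integral>\<^sup>+\<omega>. (\<integral>\<^sup>+y. ?G (restrict (\<lambda>i. prim i \<omega>) A, y)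
       \<partial>distr M (PiM {j} (\<lambda>_. borel)) (\<lambda>\<omega>. restrict (\<lambda>i. prim i \<omega>) {j})) \<partial>M)"
    by (rule nn_integral_indep_var[OF indep_restrict_prim_single[OF j] G])
  also have "\<dots> = (\<integral>\<^sup>+\<omega>. (\<integral>\<^sup>+y. F (restrict (\<lambda>i. prim i \<omega>) A, y) \<partial>distr M borel (prim j)) \<partial>M)"
  proof (rule nn_integral_cong)
    fix \<omega> assume w: "\<omega> \<in> space M"
    have m1: "(\<lambda>y. F (restrict (\<lambda>i. prim i \<omega>) A, y)) \<in> borel_measurable borel"
      using w by measurable
    have "(\<integral>\<^sup>+y. ?G (restrict (\<lambda>i. prim i \<omega>) A, y)
       \<partial>distr M (PiM {j} (\<lambda>_. borel)) (\<lambda>\<omega>. restrict (\<lambda>i. prim i \<omega>) {j})) =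
       (\<integral>\<^sup>+\<omega>'. F (restrict (\<lambda>i. prim i \<omega>) A, prim j \<omega>') \<partial>M)"
      using w by (subst nn_integral_distr) auto
    also have "\<dots> = (\<integral>\<^sup>+y. F (restrict (\<lambda>i. prim i \<omega>) A, y) \<partial>distr M borel (prim j))"
      using m1 by (subst nn_integral_distr) auto
    finally show "(\<integral>\<^sup>+y. ?G (restrict (\<lambda>i. prim i \<omega>) A, y)
       \<partial>distr M (PiM {j} (\<lambda>_. borel)) (\<lambda>\<omega>. restrict (\<lambda>i. prim i \<omega>) {j})) =
       (\<integral>\<^sup>+y. F (restrict (\<lambda>i. prim i \<omega>) A, y) \<partial>distr M borel (prim j))" .
  qed
  finally show ?thesis .
qed

lemma distr_gap: "distr M borel (gap k) = exp_law lam"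
proof -
  have "distr M borel (gap k) = distr M lborel (gap k)" by (rule distr_cong) auto
  also have "\<dots> = exp_law lam" using distributed_distr_eq_density[OF gap_exp[of k]] .
  finally show ?thesis .
qed

lemma prim_Inl: "prim (Inl k) = gap k" by (simp add: prim_def)

definition arrival_of_coords :: "nat \<Rightarrow> (nat + nat + nat \<Rightarrow> real) \<Rightarrow> real" where
  "arrival_of_coords k v = past_prev_arrival k (restrict v (past_idx k)) + v (Inl k)"

lemma arrival_of_coords_measurable:
  assumes "past_idx k \<subseteq> A" "Inl k \<in> A"
  shows "arrival_of_coords k \<in> borel_measurable (PiM A (\<lambda>_. borel))"
  unfolding arrival_of_coords_def
  by (intro borel_measurable_add measurable_compose[OF measurable_restrict_subset[OF assms(1)] past_prev_arrival_measurable]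
      measurable_component_singleton assms(2))

lemma arrival_of_coords_prim:
  assumes "past_idx k \<subseteq> A" "Inl k \<in> A"
  shows "arrival_of_coords k (restrict (\<lambda>i. prim i \<omega>) A) = a k \<omega>"
proof -
  have "A \<inter> past_idx k = past_idx k" using assms(1) by auto
  then show ?thesis
    using assms(2) by (simp add: arrival_of_coords_def past_def[symmetric] past_prev_arrival_past arrival_eq prim_Inl)
qed

lemma gap_not_in_past: "Inl k \<notin> past_idx k" by (auto simp: past_idx_def)

text \<open>Conditionally on the past, the \<open>k\<close>-th gap is still exponential, so the
memorylessness identity applies inside the expectation.\<close>

lemma nn_integral_at_arrival:
  fixes H :: "real \<times> (nat + nat + nat \<Rightarrow> real) \<Rightarrow> ennreal"
  assumes H[measurable]: "H \<in> borel_measurable (borel \<Otimes>\<^sub>M past_space k)"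
  shows "(\<integral>\<^sup>+\<omega>. H (a k \<omega>, past k \<omega>) \<partial>M) =
         lam * (\<integral>\<^sup>+\<omega>. (\<integral>\<^sup>+t. indicator {prev_arrival k \<omega><..<a k \<omega>} t * H (t, past k \<omega>) \<partial>lborel) \<partial>M)"
proof -
  let ?F = "\<lambda>p::(nat + nat + nat \<Rightarrow> real) \<times> real. H (past_prev_arrival k (fst p) + snd p, fst p)"
  let ?F2 = "\<lambda>p::(nat + nat + nat \<Rightarrow> real) \<times> real.
     \<integral>\<^sup>+t. indicator {past_prev_arrival k (fst p)<..<past_prev_arrival k (fst p) + snd p} t * H (t, fst p) \<partial>lborel"
  have F: "?F \<in> borel_measurable (past_space k \<Otimes>\<^sub>M borel)" by measurable
  have "(\<lambda>q. H (snd q, fst (fst q))) \<in> borel_measurable ((past_space k \<Otimes>\<^sub>M borel) \<Otimes>\<^sub>M borel)"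
    by measurable
  then have F2: "?F2 \<in> borel_measurable (past_space k \<Otimes>\<^sub>M borel)"
    using borel_measurable_nn_integral_window[of "\<lambda>p. past_prev_arrival k (fst p)" "past_space k \<Otimes>\<^sub>M borel"
        "\<lambda>p. past_prev_arrival k (fst p) + snd p" "\<lambda>q. H (snd q, fst (fst q))"] by simp
  have G[measurable]: "(\<lambda>\<omega>. \<integral>\<^sup>+g. ?F2 (past k \<omega>, g) \<partial>exp_law lam) \<in> borel_measurable M"
  proof -
    interpret E: prob_space "exp_law lam" by (rule prob_space_exponential_density[OF lam])
    have "(\<lambda>z. \<integral>\<^sup>+g. ?F2 (z, g) \<partial>exp_law lam) \<in> borel_measurable (past_space k)"
      by (rule E.borel_measurable_nn_integral_fst) (use F2 in simp)
    then show ?thesis by measurable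
  qed
  have "(\<integral>\<^sup>+\<omega>. H (a k \<omega>, past k \<omega>) \<partial>M) = (\<integral>\<^sup>+\<omega>. ?F (restrict (\<lambda>i. prim i \<omega>) (past_idx k), prim (Inl k) \<omega>) \<partial>M)"
    by (simp only: past_def[symmetric] prim_Inl past_prev_arrival_past arrival_eq fst_conv snd_conv)
  also have "\<dots> = (\<integral>\<^sup>+\<omega>. (\<integral>\<^sup>+g. ?F (restrict (\<lambda>i. prim i \<omega>) (past_idx k), g) \<partial>distr M borel (prim (Inl k))) \<partial>M)"
    by (rule nn_integral_indep_prim[OF gap_not_in_past F])
  also have "\<dots> = (\<integral>\<^sup>+\<omega>. (\<integral>\<^sup>+g. H (prev_arrival k \<omega> + g, past k \<omega>) \<partial>exp_law lam) \<partial>M)"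
    by (simp only: past_def[symmetric] prim_Inl past_prev_arrival_past fst_conv snd_conv distr_gap)
  also have "\<dots> = (\<integral>\<^sup>+\<omega>. lam * (\<integral>\<^sup>+g. ?F2 (past k \<omega>, g) \<partial>exp_law lam) \<partial>M)"
  proof (rule nn_integral_cong)
    fix \<omega> assume w: "\<omega> \<in> space M"
    have hm: "(\<lambda>t. H (t, past k \<omega>)) \<in> borel_measurable borel" using w by measurable
    show "(\<integral>\<^sup>+g. H (prev_arrival k \<omega> + g, past k \<omega>) \<partial>exp_law lam) = lam * (\<integral>\<^sup>+g. ?F2 (past k \<omega>, g) \<partial>exp_law lam)"
      using nn_integral_exp_law_shift[OF lam hm, of "prev_arrival k \<omega>"] by (simp add: past_prev_arrival_past)
  qed
  also have "\<dots> = lam * (\<integral>\<^sup>+\<omega>. (\<integral>\<^sup>+g. ?F2 (past k \<omega>, g) \<partial>exp_law lam) \<partial>M)"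
    by (rule nn_integral_cmult) measurable
  also have "(\<integral>\<^sup>+\<omega>. (\<integral>\<^sup>+g. ?F2 (past k \<omega>, g) \<partial>exp_law lam) \<partial>M) =
      (\<integral>\<^sup>+\<omega>. (\<integral>\<^sup>+g. ?F2 (restrict (\<lambda>i. prim i \<omega>) (past_idx k), g) \<partial>distr M borel (prim (Inl k))) \<partial>M)"
    by (simp only: past_def[symmetric] prim_Inl distr_gap)
  also have "\<dots> = (\<integral>\<^sup>+\<omega>. ?F2 (restrict (\<lambda>i. prim i \<omega>) (past_idx k), prim (Inl k) \<omega>) \<partial>M)"
    by (rule nn_integral_indep_prim[OF gap_not_in_past F2, symmetric])
  also have "\<dots> = (\<integral>\<^sup>+\<omega>. (\<integral>\<^sup>+t. indicator {prev_arrival k \<omega><..<a k \<omega>} t * H (t, past k \<omega>) \<partial>lborel) \<partial>M)"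
    by (simp only: past_def[symmetric] prim_Inl past_prev_arrival_past arrival_eq fst_conv snd_conv)
  finally show ?thesis .
qed

lemma interarrival_indicator_sum_le:
  assumes w: "\<omega> \<in> pos_gap_paths"
  shows "(\<Sum>k. indicator {prev_arrival k \<omega><..<a k \<omega>} t :: ennreal) \<le> indicator {0<..} t"
proof (cases "\<exists>k. t \<in> {prev_arrival k \<omega><..<a k \<omega>}")
  case False
  then have "\<And>k. indicator {prev_arrival k \<omega><..<a k \<omega>} t = (0::ennreal)" by auto
  then show ?thesis by simp
next
  case True
  then obtain k0 where k0: "t \<in> {prev_arrival k0 \<omega><..<a k0 \<omega>}" by blast
  have other: "k \<noteq> k0 \<Longrightarrow> t \<notin> {prev_arrival k \<omega><..<a k \<omega>}" for k
  proof
    assume "k \<noteq> k0" "t \<in> {prev_arrival k \<omega><..<a k \<omega>}"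
    then consider "k < k0" | "k0 < k" by linarith
    then show False
    proof cases
      case 1 then show False using arrival_le_prev_arrival[OF w 1] k0 \<open>t \<in> {prev_arrival k \<omega><..<a k \<omega>}\<close> by auto
    next
      case 2 then show False using arrival_le_prev_arrival[OF w 2] k0 \<open>t \<in> {prev_arrival k \<omega><..<a k \<omega>}\<close> by auto
    qed
  qed
  have "(\<Sum>k. indicator {prev_arrival k \<omega><..<a k \<omega>} t :: ennreal) = (\<Sum>k\<in>{k0}. indicator {prev_arrival k \<omega><..<a k \<omega>} t)"
    by (rule suminf_finite) (use other in \<open>auto simp: indicator_def\<close>)
  also have "\<dots> = 1" using k0 by simp
  also have "\<dots> = indicator {0<..} t" using k0 prev_arrival_nonneg[OF w, of k0] by (auto simp: indicator_def)
  finally show ?thesis by simp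
qed

lemma measurable_interarrival_integral:
  fixes H :: "real \<times> (nat + nat + nat \<Rightarrow> real) \<Rightarrow> ennreal"
  assumes H[measurable]: "H \<in> borel_measurable (borel \<Otimes>\<^sub>M past_space k)"
  shows "(\<lambda>\<omega>. \<integral>\<^sup>+t. indicator {prev_arrival k \<omega><..<a k \<omega>} t * H (t, past k \<omega>) \<partial>lborel) \<in> borel_measurable M"
proof -
  have "(\<lambda>q. H (snd q, past k (fst q))) \<in> borel_measurable (M \<Otimes>\<^sub>M borel)" by measurable
  then show ?thesis
    using borel_measurable_nn_integral_window[of "prev_arrival k" M "a k" "\<lambda>q. H (snd q, past k (fst q))"] by simp
qed

lemma expected_arrivals_le: "(\<integral>\<^sup>+\<omega>. (\<Sum>k. indicator {..T} (a k \<omega>)) \<partial>M) \<le> lam * ennreal T"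
proof -
  have Hm: "(\<lambda>p::real \<times> (nat + nat + nat \<Rightarrow> real). indicator {..T} (fst p) :: ennreal) \<in> borel_measurable (borel \<Otimes>\<^sub>M past_space k)" for k
    by measurable
  have "(\<integral>\<^sup>+\<omega>. (\<Sum>k. indicator {..T} (a k \<omega>)) \<partial>M) = (\<Sum>k. \<integral>\<^sup>+\<omega>. indicator {..T} (a k \<omega>) \<partial>M)"
    by (rule nn_integral_suminf) measurable
  also have "\<dots> = lam * (\<Sum>k. (\<integral>\<^sup>+\<omega>. (\<integral>\<^sup>+t. indicator {prev_arrival k \<omega><..<a k \<omega>} t * indicator {..T} t \<partial>lborel) \<partial>M))"
    using nn_integral_at_arrival[OF Hm] by simp
  also have "(\<Sum>k. (\<integral>\<^sup>+\<omega>. (\<integral>\<^sup>+t. indicator {prev_arrival k \<omega><..<a k \<omega>} t * indicator {..T} t \<partial>lborel) \<partial>M)) =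
      (\<integral>\<^sup>+\<omega>. (\<integral>\<^sup>+t. (\<Sum>k. indicator {prev_arrival k \<omega><..<a k \<omega>} t * indicator {..T} t) \<partial>lborel) \<partial>M)"
    by (subst nn_integral_suminf[symmetric], use measurable_interarrival_integral[OF Hm] in simp)
       (intro nn_integral_cong nn_integral_suminf[symmetric], measurable)
  also have "\<dots> \<le> (\<integral>\<^sup>+\<omega>. (\<integral>\<^sup>+t. indicator {0<..T} t \<partial>lborel) \<partial>M)"
  proof (rule nn_integral_mono_AE)
    show "AE \<omega> in M. (\<integral>\<^sup>+t. (\<Sum>k. indicator {prev_arrival k \<omega><..<a k \<omega>} t * indicator {..T} t) \<partial>lborel) \<le>
          (\<integral>\<^sup>+t. indicator {0<..T} t \<partial>lborel)"
      using AE_pos_gap_paths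
    proof (rule AE_mp, intro AE_I2 impI nn_integral_mono)
      fix \<omega> t assume w: "\<omega> \<in> pos_gap_paths"
      have "(\<Sum>k. indicator {prev_arrival k \<omega><..<a k \<omega>} t * indicator {..T} t) =
            (\<Sum>k. indicator {prev_arrival k \<omega><..<a k \<omega>} t :: ennreal) * indicator {..T} t" by simp
      also have "\<dots> \<le> indicator {0<..} t * indicator {..T} t"
        by (intro mult_right_mono interarrival_indicator_sum_le[OF w]) auto
      also have "\<dots> = indicator {0<..T} t" by (auto simp: indicator_def)
      finally show "(\<Sum>k. indicator {prev_arrival k \<omega><..<a k \<omega>} t * indicator {..T} t) \<le> (indicator {0<..T} t :: ennreal)" .
    qed
  qed
  also have "\<dots> = ennreal T"
    using emeasure_space_1 by (cases "0 \<le> T") (auto simp: ennreal_neg)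
  finally show ?thesis by (simp add: mult_left_mono)
qed

lemma arrivals_unbounded_AE: "AE \<omega> in M. \<forall>n::nat. \<exists>k. real n < a k \<omega>"
proof (subst AE_all_countable, intro allI)
  fix n :: nat
  have "(\<integral>\<^sup>+\<omega>. (\<Sum>k. indicator {..real n} (a k \<omega>)) \<partial>M) \<noteq> \<infinity>"
    using expected_arrivals_le[of "real n"] by (auto simp: top_unique ennreal_mult_eq_top_iff)
  then have "AE \<omega> in M. (\<Sum>k. indicator {..real n} (a k \<omega>) :: ennreal) \<noteq> \<infinity>"
    by (intro nn_integral_PInf_AE) measurable
  then show "AE \<omega> in M. \<exists>k. real n < a k \<omega>"
  proof (rule AE_mp, intro AE_I2 impI)
    fix \<omega> assume fin: "(\<Sum>k. indicator {..real n} (a k \<omega>) :: ennreal) \<noteq> \<infinity>"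
    show "\<exists>k. real n < a k \<omega>"
    proof (rule ccontr)
      assume "\<not> (\<exists>k. real n < a k \<omega>)"
      then have "\<And>k. indicator {..real n} (a k \<omega>) = (1::ennreal)" by (auto simp: not_less)
      then show False using fin suminf_one_ennreal by simp
    qed
  qed
qed

end

subsection \<open>Usage of the resource by admitted customers\<close>

locale admission_policy = arrival_model M lam gap U S for M :: "'a measure" and lam gap U S +
  fixes c :: nat and x :: "real \<Rightarrow> 'a \<Rightarrow> real" and G :: "real measure"
  assumes U_unif: "\<And>k. distributed M lborel (U k) (indicator {0..1})"
    and G_prob: "prob_space G" and G_sets: "sets G = sets borel"
    and S_dist: "\<And>k. distr M borel (S k) = G"
    and policy: "feasible_policy M c gap U S x"
begin

lemma x_measurable: "(\<lambda>(t, \<omega>). x t \<omega>) \<in> borel_measurable predictable_history"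
  using policy unfolding feasible_policy_def by blast

lemma x_bounds: "0 \<le> t \<Longrightarrow> \<omega> \<in> space M \<Longrightarrow> 0 \<le> x t \<omega> \<and> x t \<omega> \<le> 1"
  using policy unfolding feasible_policy_def by blast

lemma x_zero_if_full_AE: "AE \<omega> in M. \<forall>t\<ge>0. c \<le> busy gap U S x t \<omega> \<longrightarrow> x t \<omega> = 0"
  using policy unfolding feasible_policy_def by blast

lemma U_pos_AE: "AE \<omega> in M. 0 < U k \<omega>"
proof (rule AE_I[where N="{\<omega>\<in>space M. U k \<omega> \<le> 0}"])
  show "{\<omega> \<in> space M. \<not> 0 < U k \<omega>} \<subseteq> {\<omega>\<in>space M. U k \<omega> \<le> 0}" by auto
  have [measurable]: "U k \<in> borel_measurable M" by (rule U_meas)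
  show "{\<omega>\<in>space M. U k \<omega> \<le> 0} \<in> sets M" by measurable
  have "emeasure M {\<omega>\<in>space M. U k \<omega> \<le> 0} = emeasure (distr M lborel (U k)) {..0}"
    by (subst emeasure_distr) (auto intro!: arg_cong2[where f=emeasure])
  also have "\<dots> = emeasure (density lborel (indicator {0..1})) {..(0::real)}"
    using distributed_distr_eq_density[OF U_unif[of k]] by metis
  also have "\<dots> = (\<integral>\<^sup>+u. indicator {0..1} u * indicator {..0} u \<partial>(lborel::real measure))"
    by (subst emeasure_density) auto
  also have "\<dots> = (\<integral>\<^sup>+u. indicator {0} u \<partial>(lborel::real measure))"
    by (intro nn_integral_cong) (auto simp: indicator_def)
  also have "\<dots> = 0" by simp
  finally show "emeasure M {\<omega>\<in>space M. U k \<omega> \<le> 0} = 0" .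
qed

definition regular_paths :: "'a set" where
  "regular_paths = {\<omega>\<in>pos_gap_paths. (\<forall>n::nat. \<exists>k. real n < a k \<omega>) \<and> (\<forall>k. 0 < U k \<omega>) \<and>
            (\<forall>t\<ge>0. c \<le> busy gap U S x t \<omega> \<longrightarrow> x t \<omega> = 0)}"

lemma AE_regular_paths: "AE \<omega> in M. \<omega> \<in> regular_paths"
proof -
  have "AE \<omega> in M. \<forall>k. 0 < U k \<omega>" using U_pos_AE by (simp add: AE_all_countable)
  then show ?thesis using AE_pos_gap_paths arrivals_unbounded_AE x_zero_if_full_AE by (auto simp: regular_paths_def)
qed

definition busy_set :: "real \<Rightarrow> 'a \<Rightarrow> nat set" where
  "busy_set t \<omega> = {k. admitted gap U x k \<omega> \<and> a k \<omega> < t \<and> t < a k \<omega> + S k \<omega>}"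

lemma busy_eq: "busy gap U S x t \<omega> = card (busy_set t \<omega>)"
  by (simp add: busy_def busy_set_def)

lemma regular_paths_pos_gap: "\<omega> \<in> regular_paths \<Longrightarrow> \<omega> \<in> pos_gap_paths" by (simp add: regular_paths_def)

lemma finite_arrivals_before:
  assumes w: "\<omega> \<in> regular_paths"
  shows "finite {k. a k \<omega> < t}"
proof -
  obtain n :: nat where "t \<le> real n" using real_arch_simple by blast
  moreover obtain K where "real n < a K \<omega>" using w unfolding regular_paths_def by blast
  ultimately have "{k. a k \<omega> < t} \<subseteq> {..<K}"
    using arrival_mono[OF regular_paths_pos_gap[OF w]] by (auto simp: not_less[symmetric]) (meson le_less_trans less_le_not_le not_le)
  then show ?thesis using finite_subset by blast
qed

lemma finite_busy_set: "\<omega> \<in> regular_paths \<Longrightarrow> finite (busy_set t \<omega>)"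
  by (rule finite_subset[OF _ finite_arrivals_before]) (auto simp: busy_set_def)

text \<open>The busy customer that arrived last found all the others busy on its arrival, and the
policy admits nobody while \<open>c\<close> units are busy.\<close>

lemma card_busy_set_le:
  assumes w: "\<omega> \<in> regular_paths"
  shows "card (busy_set t \<omega>) \<le> c"
proof (rule ccontr)
  assume "\<not> card (busy_set t \<omega>) \<le> c"
  then have cgt: "c < card (busy_set t \<omega>)" by simp
  let ?K = "busy_set t \<omega>"
  have fin: "finite ?K" by (rule finite_busy_set[OF w])
  have ne: "?K \<noteq> {}" using cgt by auto
  define k where "k = Max ?K"
  have kK: "k \<in> ?K" unfolding k_def using fin ne by (rule Max_in)
  have sub: "?K - {k} \<subseteq> busy_set (a k \<omega>) \<omega>"
  proof
    fix j assume j: "j \<in> ?K - {k}"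
    then have "j < k" using Max_ge[OF fin, of j] by (auto simp: k_def)
    then have "a j \<omega> < a k \<omega>" by (rule arrival_strict_mono[OF regular_paths_pos_gap[OF w]])
    moreover have "a k \<omega> < t" using kK by (simp add: busy_set_def)
    ultimately show "j \<in> busy_set (a k \<omega>) \<omega>" using j by (auto simp: busy_set_def)
  qed
  have "c \<le> card (?K - {k})" using cgt kK fin by (simp add: card_Diff_singleton)
  also have "\<dots> \<le> card (busy_set (a k \<omega>) \<omega>)" by (rule card_mono[OF finite_busy_set[OF w] sub])
  finally have "c \<le> busy gap U S x (a k \<omega>) \<omega>" by (simp add: busy_eq)
  then have "x (a k \<omega>) \<omega> = 0"
    using w arrival_pos[OF regular_paths_pos_gap[OF w], of k] by (auto simp: regular_paths_def)
  moreover have "admitted gap U x k \<omega>" using kK by (simp add: busy_set_def)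
  ultimately have "U k \<omega> \<le> 0" by (simp add: admitted_def)
  then show False using w by (auto simp: regular_paths_def not_le[symmetric])
qed

lemma busy_set_empty:
  assumes w: "\<omega> \<in> pos_gap_paths" and t: "t \<le> 0"
  shows "busy_set t \<omega> = {}"
proof (rule ccontr)
  assume "busy_set t \<omega> \<noteq> {}"
  then obtain k where "k \<in> busy_set t \<omega>" by blast
  then have "a k \<omega> < t" by (simp add: busy_set_def)
  with arrival_pos[OF w, of k] t show False by linarith
qed

lemma sum_busy_indicator_le:
  assumes w: "\<omega> \<in> regular_paths"
  shows "(\<Sum>k. indicator {\<omega>. admitted gap U x k \<omega>} \<omega> * indicator {a k \<omega><..<a k \<omega> + S k \<omega>} t * (indicator {..<T} t :: ennreal))
    \<le> of_nat c * indicator {0..T} t"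
proof -
  have "(\<Sum>k. indicator {\<omega>. admitted gap U x k \<omega>} \<omega> * indicator {a k \<omega><..<a k \<omega> + S k \<omega>} t * (indicator {..<T} t :: ennreal))
      = (\<Sum>k\<in>busy_set t \<omega>. indicator {..<T} t)"
    by (subst suminf_finite[OF finite_busy_set[OF w]])
       (auto simp: busy_set_def indicator_def intro!: sum.cong)
  also have "\<dots> = of_nat (card (busy_set t \<omega>)) * indicator {..<T} t" by simp
  also have "\<dots> \<le> of_nat c * indicator {0..T} t"
  proof (cases "0 \<le> t")
    case True
    then show ?thesis using card_busy_set_le[OF w, of t]
      by (intro mult_mono) (auto simp: indicator_def)
  next
    case False
    then show ?thesis using busy_set_empty[OF regular_paths_pos_gap[OF w], of t] by simp
  qed
  finally show ?thesis .
qed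

definition usage_in :: "real \<Rightarrow> nat \<Rightarrow> 'a \<Rightarrow> ennreal" where
  "usage_in T k \<omega> = indicator {\<omega>. admitted gap U x k \<omega>} \<omega> * indicator {..<T} (a k \<omega>) *
     ennreal (min (S k \<omega>) (T - a k \<omega>))"

lemma sum_usage_in_le:
  assumes w: "\<omega> \<in> regular_paths" and T: "0 \<le> T"
  shows "(\<Sum>k. usage_in T k \<omega>) \<le> of_nat c * ennreal T"
proof -
  let ?B = "\<lambda>k t. indicator {\<omega>. admitted gap U x k \<omega>} \<omega> * indicator {a k \<omega><..<a k \<omega> + S k \<omega>} t * (indicator {..<T} t :: ennreal)"
  have le: "usage_in T k \<omega> \<le> (\<integral>\<^sup>+t. ?B k t \<partial>lborel)" for k
  proof (cases "admitted gap U x k \<omega> \<and> a k \<omega> < T \<and> 0 \<le> S k \<omega>")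
    case True
    have "(\<integral>\<^sup>+t. ?B k t \<partial>lborel) = (\<integral>\<^sup>+t. indicator {a k \<omega><..<min (a k \<omega> + S k \<omega>) T} t \<partial>lborel)"
      using True by (intro nn_integral_cong) (auto simp: indicator_def)
    also have "\<dots> = ennreal (min (a k \<omega> + S k \<omega>) T - a k \<omega>)"
      using True by simp
    finally show ?thesis using True by (simp add: usage_in_def min_diff_distrib_left)
  next
    case False
    then show ?thesis by (auto simp: usage_in_def indicator_def ennreal_neg)
  qed
  have "(\<Sum>k. usage_in T k \<omega>) \<le> (\<Sum>k. \<integral>\<^sup>+t. ?B k t \<partial>lborel)"
    by (intro suminf_le le) auto
  also have "\<dots> = (\<integral>\<^sup>+t. (\<Sum>k. ?B k t) \<partial>lborel)"
    by (rule nn_integral_suminf[symmetric]) simp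
  also have "\<dots> \<le> (\<integral>\<^sup>+t. of_nat c * indicator {0..T} t \<partial>lborel)"
    by (intro nn_integral_mono sum_busy_indicator_le[OF w])
  also have "\<dots> = of_nat c * ennreal T"
    using T by (subst nn_integral_cmult) auto
  finally show ?thesis .
qed

definition policy_on_past :: "nat \<Rightarrow> real \<times> (nat + nat + nat \<Rightarrow> real) \<Rightarrow> ennreal" where
  "policy_on_past k = (SOME h. h \<in> borel_measurable (borel \<Otimes>\<^sub>M past_space k) \<and>
      (\<forall>\<omega>\<in>pos_gap_paths. \<forall>t. prev_arrival k \<omega> < t \<and> t \<le> a k \<omega> \<longrightarrow> ennreal (x t \<omega>) = h (t, past k \<omega>)))"

lemma policy_on_past_spec: "policy_on_past k \<in> borel_measurable (borel \<Otimes>\<^sub>M past_space k) \<and>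
      (\<forall>\<omega>\<in>pos_gap_paths. \<forall>t. prev_arrival k \<omega> < t \<and> t \<le> a k \<omega> \<longrightarrow> ennreal (x t \<omega>) = policy_on_past k (t, past k \<omega>))"
proof -
  have "(\<lambda>p. ennreal (case p of (t, \<omega>) \<Rightarrow> x t \<omega>)) \<in> borel_measurable predictable_history"
    using x_measurable by measurable
  from predictable_fun_factors_through_past[OF this, of k] have "\<exists>h. h \<in> borel_measurable (borel \<Otimes>\<^sub>M past_space k) \<and>
      (\<forall>\<omega>\<in>pos_gap_paths. \<forall>t. prev_arrival k \<omega> < t \<and> t \<le> a k \<omega> \<longrightarrow> ennreal (x t \<omega>) = h (t, past k \<omega>))" by auto
  then show ?thesis unfolding policy_on_past_def by (rule someI_ex)
qed

lemma policy_on_past_measurable[measurable]: "policy_on_past k \<in> borel_measurable (borel \<Otimes>\<^sub>M past_space k)"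
  using policy_on_past_spec by blast

lemma policy_on_past_eq: "\<omega> \<in> pos_gap_paths \<Longrightarrow> prev_arrival k \<omega> < t \<Longrightarrow> t \<le> a k \<omega> \<Longrightarrow> policy_on_past k (t, past k \<omega>) = ennreal (x t \<omega>)"
  using policy_on_past_spec by metis

lemma x_bounds_interarrival: "\<omega> \<in> pos_gap_paths \<Longrightarrow> prev_arrival k \<omega> < t \<Longrightarrow> 0 \<le> x t \<omega> \<and> x t \<omega> \<le> 1"
  using x_bounds[of t \<omega>] prev_arrival_nonneg[of \<omega> k] pos_gap_paths_subset by auto

lemma enn2real_policy_on_past: "\<omega> \<in> pos_gap_paths \<Longrightarrow> prev_arrival k \<omega> < t \<Longrightarrow> t \<le> a k \<omega> \<Longrightarrow> enn2real (policy_on_past k (t, past k \<omega>)) = x t \<omega>"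
  using policy_on_past_eq[of \<omega> k t] x_bounds_interarrival[of \<omega> k t] by simp

lemma policy_on_past_clip: "\<omega> \<in> pos_gap_paths \<Longrightarrow> prev_arrival k \<omega> < t \<Longrightarrow> t \<le> a k \<omega> \<Longrightarrow>
   ennreal (min 1 (enn2real (policy_on_past k (t, past k \<omega>)))) = ennreal (x t \<omega>)"
  using enn2real_policy_on_past[of \<omega> k t] x_bounds_interarrival[of \<omega> k t] by simp

definition mean_min_usage :: "real \<Rightarrow> ennreal" where
  "mean_min_usage u = (\<integral>\<^sup>+s. ennreal (min s u) \<partial>G)"

lemma mean_min_usage_mono: "u \<le> v \<Longrightarrow> mean_min_usage u \<le> mean_min_usage v"
  unfolding mean_min_usage_def by (intro nn_integral_mono) (auto intro: ennreal_leI)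

lemma mean_min_usage_measurable[measurable]: "mean_min_usage \<in> borel_measurable borel"
proof -
  interpret G: prob_space G by (rule G_prob)
  have m: "(\<lambda>p::real \<times> real. ennreal (min (snd p) (fst p))) \<in> borel_measurable (borel \<Otimes>\<^sub>M borel)"
    by measurable
  have eq: "borel_measurable ((borel::real measure) \<Otimes>\<^sub>M G) = borel_measurable (borel \<Otimes>\<^sub>M (borel::real measure))"
    by (rule measurable_cong_sets) (auto intro: sets_pair_measure_cong simp: G_sets)
  have "(\<lambda>(u, s). ennreal (min s u)) \<in> borel_measurable (borel \<Otimes>\<^sub>M G)"
    unfolding eq using m by (simp add: split_beta')
  then show ?thesis unfolding mean_min_usage_def by (rule G.borel_measurable_nn_integral)
qed

lemma mean_min_usage_finite: "mean_min_usage L < top"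
proof -
  interpret G: prob_space G by (rule G_prob)
  have "mean_min_usage L \<le> (\<integral>\<^sup>+s. ennreal L \<partial>G)"
    unfolding mean_min_usage_def by (intro nn_integral_mono) (auto intro: ennreal_leI)
  also have "\<dots> = ennreal L" using G.emeasure_space_1 by simp
  finally show ?thesis using ennreal_less_top le_less_trans by blast
qed

lemma distr_S: "distr M borel (prim (Inr (Inr k))) = G"
  by (simp add: prim_def S_dist)

lemma distr_U: "distr M borel (prim (Inr (Inl k))) = density lborel (indicator {0..1})"
proof -
  have "distr M borel (U k) = distr M lborel (U k)" by (rule distr_cong) auto
  then show ?thesis using distributed_distr_eq_density[OF U_unif[of k]] by (simp add: prim_def)
qed

lemma nn_integral_usage:
  fixes \<Phi> :: "(nat + nat + nat \<Rightarrow> real) \<Rightarrow> ennreal" and b :: "(nat + nat + nat \<Rightarrow> real) \<Rightarrow> real"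
  assumes j: "Inr (Inr k) \<notin> A"
    and \<Phi>[measurable]: "\<Phi> \<in> borel_measurable (PiM A (\<lambda>_. borel))"
    and b[measurable]: "b \<in> borel_measurable (PiM A (\<lambda>_. borel))"
  shows "(\<integral>\<^sup>+\<omega>. \<Phi> (restrict (\<lambda>i. prim i \<omega>) A) * ennreal (min (S k \<omega>) (b (restrict (\<lambda>i. prim i \<omega>) A))) \<partial>M) =
         (\<integral>\<^sup>+\<omega>. \<Phi> (restrict (\<lambda>i. prim i \<omega>) A) * mean_min_usage (b (restrict (\<lambda>i. prim i \<omega>) A)) \<partial>M)"
proof -
  let ?F = "\<lambda>p. \<Phi> (fst p) * ennreal (min (snd p) (b (fst p)))"
  have F: "?F \<in> borel_measurable (PiM A (\<lambda>_. borel) \<Otimes>\<^sub>M borel)" by measurable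
  have "(\<integral>\<^sup>+\<omega>. \<Phi> (restrict (\<lambda>i. prim i \<omega>) A) * ennreal (min (S k \<omega>) (b (restrict (\<lambda>i. prim i \<omega>) A))) \<partial>M) =
        (\<integral>\<^sup>+\<omega>. ?F (restrict (\<lambda>i. prim i \<omega>) A, prim (Inr (Inr k)) \<omega>) \<partial>M)"
    by (simp add: prim_def)
  also have "\<dots> = (\<integral>\<^sup>+\<omega>. (\<integral>\<^sup>+y. ?F (restrict (\<lambda>i. prim i \<omega>) A, y) \<partial>distr M borel (prim (Inr (Inr k)))) \<partial>M)"
    by (rule nn_integral_indep_prim[OF j F])
  also have "\<dots> = (\<integral>\<^sup>+\<omega>. \<Phi> (restrict (\<lambda>i. prim i \<omega>) A) * mean_min_usage (b (restrict (\<lambda>i. prim i \<omega>) A)) \<partial>M)"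
  proof (rule nn_integral_cong)
    fix \<omega> assume "\<omega> \<in> space M"
    have "(\<integral>\<^sup>+y. ?F (restrict (\<lambda>i. prim i \<omega>) A, y) \<partial>G) =
          \<Phi> (restrict (\<lambda>i. prim i \<omega>) A) * (\<integral>\<^sup>+y. ennreal (min y (b (restrict (\<lambda>i. prim i \<omega>) A))) \<partial>G)"
      by (subst nn_integral_cmult[symmetric]) (auto simp: measurable_cong_sets[OF G_sets refl])
    then show "(\<integral>\<^sup>+y. ?F (restrict (\<lambda>i. prim i \<omega>) A, y) \<partial>distr M borel (prim (Inr (Inr k)))) =
          \<Phi> (restrict (\<lambda>i. prim i \<omega>) A) * mean_min_usage (b (restrict (\<lambda>i. prim i \<omega>) A))"
      by (simp add: distr_S mean_min_usage_def)
  qed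
  finally show ?thesis .
qed

lemma nn_integral_admission:
  fixes \<Psi> :: "(nat + nat + nat \<Rightarrow> real) \<Rightarrow> ennreal" and \<phi> :: "(nat + nat + nat \<Rightarrow> real) \<Rightarrow> real"
  assumes j: "Inr (Inl k) \<notin> A"
    and \<Psi>[measurable]: "\<Psi> \<in> borel_measurable (PiM A (\<lambda>_. borel))"
    and \<phi>[measurable]: "\<phi> \<in> borel_measurable (PiM A (\<lambda>_. borel))"
    and \<phi>0: "\<And>v. 0 \<le> \<phi> v"
  shows "(\<integral>\<^sup>+\<omega>. indicator {\<omega>. U k \<omega> \<le> \<phi> (restrict (\<lambda>i. prim i \<omega>) A)} \<omega> * \<Psi> (restrict (\<lambda>i. prim i \<omega>) A) \<partial>M) =
         (\<integral>\<^sup>+\<omega>. ennreal (min 1 (\<phi> (restrict (\<lambda>i. prim i \<omega>) A))) * \<Psi> (restrict (\<lambda>i. prim i \<omega>) A) \<partial>M)"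
proof -
  let ?F = "\<lambda>p. indicator {..\<phi> (fst p)} (snd p) * \<Psi> (fst p)"
  have F: "?F \<in> borel_measurable (PiM A (\<lambda>_. borel) \<Otimes>\<^sub>M borel)"
  proof -
    have "(\<lambda>p. (if snd p \<le> \<phi> (fst p) then \<Psi> (fst p) else 0)) \<in> borel_measurable (PiM A (\<lambda>_. borel) \<Otimes>\<^sub>M borel)"
      by measurable
    then show ?thesis by (rule measurable_cong[THEN iffD1, rotated]) (auto simp: indicator_def)
  qed
  have "(\<integral>\<^sup>+\<omega>. indicator {\<omega>. U k \<omega> \<le> \<phi> (restrict (\<lambda>i. prim i \<omega>) A)} \<omega> * \<Psi> (restrict (\<lambda>i. prim i \<omega>) A) \<partial>M) =
        (\<integral>\<^sup>+\<omega>. ?F (restrict (\<lambda>i. prim i \<omega>) A, prim (Inr (Inl k)) \<omega>) \<partial>M)"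
    by (intro nn_integral_cong) (simp add: prim_def indicator_def)
  also have "\<dots> = (\<integral>\<^sup>+\<omega>. (\<integral>\<^sup>+y. ?F (restrict (\<lambda>i. prim i \<omega>) A, y) \<partial>distr M borel (prim (Inr (Inl k)))) \<partial>M)"
    by (rule nn_integral_indep_prim[OF j F])
  also have "\<dots> = (\<integral>\<^sup>+\<omega>. ennreal (min 1 (\<phi> (restrict (\<lambda>i. prim i \<omega>) A))) * \<Psi> (restrict (\<lambda>i. prim i \<omega>) A) \<partial>M)"
  proof (rule nn_integral_cong)
    fix \<omega> assume "\<omega> \<in> space M"
    define v where "v = \<phi> (restrict (\<lambda>i. prim i \<omega>) A)"
    have v0: "0 \<le> v" using \<phi>0 by (simp add: v_def)
    have "(\<integral>\<^sup>+y. ?F (restrict (\<lambda>i. prim i \<omega>) A, y) \<partial>density lborel (indicator {0..1})) =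
          (\<integral>\<^sup>+y. indicator {0..1} y * (indicator {..v} y * \<Psi> (restrict (\<lambda>i. prim i \<omega>) A)) \<partial>lborel)"
      by (subst nn_integral_density) (auto simp: v_def)
    also have "\<dots> = (\<integral>\<^sup>+y. \<Psi> (restrict (\<lambda>i. prim i \<omega>) A) * indicator {0..min 1 v} y \<partial>lborel)"
      by (intro nn_integral_cong) (auto simp: indicator_def)
    also have "\<dots> = \<Psi> (restrict (\<lambda>i. prim i \<omega>) A) * emeasure lborel {0..min 1 v}"
      by (subst nn_integral_cmult) auto
    also have "\<dots> = ennreal (min 1 v) * \<Psi> (restrict (\<lambda>i. prim i \<omega>) A)"
      using v0 by (simp add: mult.commute)
    finally show "(\<integral>\<^sup>+y. ?F (restrict (\<lambda>i. prim i \<omega>) A, y) \<partial>distr M borel (prim (Inr (Inl k)))) =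
         ennreal (min 1 (\<phi> (restrict (\<lambda>i. prim i \<omega>) A))) * \<Psi> (restrict (\<lambda>i. prim i \<omega>) A)"
      by (simp add: distr_U v_def)
  qed
  finally show ?thesis .
qed

text \<open>The admission test in \<open>usage_in\<close> evaluates \<open>x\<close> at a random time, so \<open>usage_in\<close> need
not be measurable; reading the decision off the past gives a measurable version of it.\<close>

definition usage_on_past :: "real \<Rightarrow> nat \<Rightarrow> 'a \<Rightarrow> ennreal" where
  "usage_on_past T k \<omega> = indicator {\<omega>. U k \<omega> \<le> enn2real (policy_on_past k (a k \<omega>, past k \<omega>))} \<omega> *
     indicator {..<T} (a k \<omega>) * ennreal (min (S k \<omega>) (T - a k \<omega>))"

lemma usage_on_past_measurable[measurable]: "usage_on_past T k \<in> borel_measurable M"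
proof -
  have [measurable]: "U k \<in> borel_measurable M" "S k \<in> borel_measurable M" by (rule U_meas S_meas)+
  have "(\<lambda>\<omega>. if U k \<omega> \<le> enn2real (policy_on_past k (a k \<omega>, past k \<omega>)) then indicator {..<T} (a k \<omega>) *
      ennreal (min (S k \<omega>) (T - a k \<omega>)) else (0::ennreal)) \<in> borel_measurable M"
    by measurable
  then show ?thesis by (rule measurable_cong[THEN iffD1, rotated]) (auto simp: usage_on_past_def indicator_def)
qed

lemma usage_on_past_eq: "\<omega> \<in> pos_gap_paths \<Longrightarrow> usage_on_past T k \<omega> = usage_in T k \<omega>"
  using enn2real_policy_on_past[of \<omega> k "a k \<omega>"]
  by (simp add: usage_on_past_def usage_in_def admitted_def indicator_def arrival_eq pos_gap_paths_def)

lemma prim_Inr_Inl: "prim (Inr (Inl k)) = U k" by (simp add: prim_def)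

definition policy_at_arrival :: "nat \<Rightarrow> (nat + nat + nat \<Rightarrow> real) \<Rightarrow> real" where
  "policy_at_arrival k v = enn2real (policy_on_past k (arrival_of_coords k v, restrict v (past_idx k)))"

lemma policy_at_arrival_measurable:
  assumes "past_idx k \<subseteq> A" "Inl k \<in> A"
  shows "policy_at_arrival k \<in> borel_measurable (PiM A (\<lambda>_. borel))"
  unfolding policy_at_arrival_def
  by (intro borel_measurable_enn2real measurable_compose[OF measurable_Pair[OF arrival_of_coords_measurable[OF assms]
        measurable_restrict_subset[OF assms(1)]] policy_on_past_measurable])

lemma policy_at_arrival_prim:
  assumes "past_idx k \<subseteq> A" "Inl k \<in> A"
  shows "policy_at_arrival k (restrict (\<lambda>i. prim i \<omega>) A) = enn2real (policy_on_past k (a k \<omega>, past k \<omega>))"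
proof -
  have "A \<inter> past_idx k = past_idx k" using assms(1) by auto
  then show ?thesis by (simp add: policy_at_arrival_def arrival_of_coords_prim[OF assms] past_def)
qed

text \<open>Expected usage of \<open>[0, T]\<close> by a customer arriving at time \<open>t\<close> after the past \<open>z\<close>.\<close>

definition usage_kernel :: "nat \<Rightarrow> real \<Rightarrow> real \<times> (nat + nat + nat \<Rightarrow> real) \<Rightarrow> ennreal" where
  "usage_kernel k T p = ennreal (min 1 (enn2real (policy_on_past k p))) * indicator {..<T} (fst p) * mean_min_usage (T - fst p)"

lemma usage_kernel_measurable[measurable]: "usage_kernel k T \<in> borel_measurable (borel \<Otimes>\<^sub>M past_space k)"
  unfolding usage_kernel_def by measurable

lemma expected_usage_on_past:
  "(\<integral>\<^sup>+\<omega>. usage_on_past T k \<omega> \<partial>M) =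
   lam * (\<integral>\<^sup>+\<omega>. (\<integral>\<^sup>+t. indicator {prev_arrival k \<omega><..<a k \<omega>} t * usage_kernel k T (t, past k \<omega>) \<partial>lborel) \<partial>M)"
proof -
  define A3 where "A3 = past_idx k \<union> {Inl k, Inr (Inl k)}"
  define A2 where "A2 = past_idx k \<union> {Inl k}"
  have J: "past_idx k \<subseteq> A3" "Inl k \<in> A3" "past_idx k \<subseteq> A2" "Inl k \<in> A2" "Inr (Inl k) \<in> A3"
    by (auto simp: A3_def A2_def)
  have n3: "Inr (Inr k) \<notin> A3" and n2: "Inr (Inl k) \<notin> A2" by (auto simp: A3_def A2_def past_idx_def)
  define \<Phi> where "\<Phi> v = indicator {v. v (Inr (Inl k)) \<le> policy_at_arrival k v} v *
      (indicator {..<T} (arrival_of_coords k v) :: ennreal)" for v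
  have \<Phi>m: "\<Phi> \<in> borel_measurable (PiM A3 (\<lambda>_. borel))"
  proof -
    have "(\<lambda>v. if v (Inr (Inl k)) \<le> policy_at_arrival k v then indicator {..<T} (arrival_of_coords k v) else (0::ennreal))
       \<in> borel_measurable (PiM A3 (\<lambda>_. borel))"
      by (intro measurable_If borel_measurable_le measurable_component_singleton[OF J(5)]
          policy_at_arrival_measurable[OF J(1,2)] measurable_compose[OF arrival_of_coords_measurable[OF J(1,2)]]
          borel_measurable_indicator) auto
    then show ?thesis by (rule measurable_cong[THEN iffD1, rotated]) (auto simp: \<Phi>_def indicator_def)
  qed
  define \<Psi> where "\<Psi> v = (indicator {..<T} (arrival_of_coords k v) :: ennreal) * mean_min_usage (T - arrival_of_coords k v)" for v
  have \<Psi>m: "\<Psi> \<in> borel_measurable (PiM A2 (\<lambda>_. borel))" unfolding \<Psi>_def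
    by (intro borel_measurable_times measurable_compose[OF arrival_of_coords_measurable[OF J(3,4)]]
        borel_measurable_indicator mean_min_usage_measurable borel_measurable_diff borel_measurable_const) auto
  note at_arrival = arrival_of_coords_prim[OF J(1,2)] arrival_of_coords_prim[OF J(3,4)]
    policy_at_arrival_prim[OF J(1,2)] policy_at_arrival_prim[OF J(3,4)]
  have "(\<integral>\<^sup>+\<omega>. usage_on_past T k \<omega> \<partial>M) =
      (\<integral>\<^sup>+\<omega>. \<Phi> (restrict (\<lambda>i. prim i \<omega>) A3) * ennreal (min (S k \<omega>) (T - arrival_of_coords k (restrict (\<lambda>i. prim i \<omega>) A3))) \<partial>M)"
    using J(5) by (intro nn_integral_cong) (simp add: usage_on_past_def \<Phi>_def at_arrival indicator_def prim_Inr_Inl)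
  also have "\<dots> = (\<integral>\<^sup>+\<omega>. \<Phi> (restrict (\<lambda>i. prim i \<omega>) A3) * mean_min_usage (T - arrival_of_coords k (restrict (\<lambda>i. prim i \<omega>) A3)) \<partial>M)"
    by (rule nn_integral_usage[OF n3 \<Phi>m]) (intro borel_measurable_diff borel_measurable_const arrival_of_coords_measurable[OF J(1,2)])
  also have "\<dots> = (\<integral>\<^sup>+\<omega>. indicator {\<omega>. U k \<omega> \<le> policy_at_arrival k (restrict (\<lambda>i. prim i \<omega>) A2)} \<omega> * \<Psi> (restrict (\<lambda>i. prim i \<omega>) A2) \<partial>M)"
    using J(5) by (intro nn_integral_cong) (simp add: \<Phi>_def \<Psi>_def at_arrival indicator_def prim_Inr_Inl)
  also have "\<dots> = (\<integral>\<^sup>+\<omega>. ennreal (min 1 (policy_at_arrival k (restrict (\<lambda>i. prim i \<omega>) A2))) * \<Psi> (restrict (\<lambda>i. prim i \<omega>) A2) \<partial>M)"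
    by (rule nn_integral_admission[OF n2 \<Psi>m]) (rule policy_at_arrival_measurable[OF J(3,4)], simp add: policy_at_arrival_def)
  also have "\<dots> = (\<integral>\<^sup>+\<omega>. usage_kernel k T (a k \<omega>, past k \<omega>) \<partial>M)"
    by (intro nn_integral_cong) (simp add: usage_kernel_def \<Psi>_def at_arrival mult.assoc)
  also have "\<dots> = lam * (\<integral>\<^sup>+\<omega>. (\<integral>\<^sup>+t. indicator {prev_arrival k \<omega><..<a k \<omega>} t * usage_kernel k T (t, past k \<omega>) \<partial>lborel) \<partial>M)"
    by (rule nn_integral_at_arrival) (rule usage_kernel_measurable)
  finally show ?thesis .
qed

lemma usage_kernel_section_measurable: "\<omega> \<in> space M \<Longrightarrow> (\<lambda>t. indicator {prev_arrival k \<omega><..<a k \<omega>} t * usage_kernel k T (t, past k \<omega>)) \<in> borel_measurable borel"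
proof -
  assume w: "\<omega> \<in> space M"
  have "past k \<omega> \<in> space (past_space k)" using measurable_space[OF past_measurable w] .
  then have [measurable]: "(\<lambda>t. usage_kernel k T (t, past k \<omega>)) \<in> borel_measurable borel"
    using measurable_compose[OF measurable_Pair2' usage_kernel_measurable] by blast
  show ?thesis by measurable
qed

lemma prev_arrival_Suc: "prev_arrival (Suc j) \<omega> = a j \<omega>"
  by (simp add: prev_arrival_def arrival_def lessThan_Suc_atMost)

lemma interarrival_interval_ex:
  assumes w: "\<omega> \<in> regular_paths" and t: "0 < t" and tn: "\<forall>k. t \<noteq> a k \<omega>"
  shows "\<exists>k. prev_arrival k \<omega> < t \<and> t < a k \<omega>"
proof -
  obtain n :: nat where "t < real n" using reals_Archimedean2 by blast
  moreover obtain K where "real n < a K \<omega>" using w unfolding regular_paths_def by blast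
  ultimately have ex: "\<exists>k. t < a k \<omega>" by (intro exI[of _ K]) simp
  define k where "k = (LEAST k. t < a k \<omega>)"
  have tk: "t < a k \<omega>" unfolding k_def by (rule LeastI_ex[OF ex])
  have "prev_arrival k \<omega> < t"
  proof (cases k)
    case 0 then show ?thesis using t by (simp add: prev_arrival_def)
  next
    case (Suc j)
    then have "\<not> t < a j \<omega>" using not_less_Least[of j "\<lambda>k. t < a k \<omega>"] by (simp add: k_def)
    then have "a j \<omega> < t" using tn[rule_format, of j] by auto
    then show ?thesis by (simp add: Suc prev_arrival_Suc)
  qed
  with tk show ?thesis by blast
qed

lemma x_le_usage_kernel_sum:
  assumes w: "\<omega> \<in> regular_paths" and L: "0 \<le> L"
    and t: "0 < t" "t < T - L" "t \<notin> range (\<lambda>k. a k \<omega>)"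
  shows "ennreal (x t \<omega>) * mean_min_usage L
    \<le> (\<Sum>k. indicator {prev_arrival k \<omega><..<a k \<omega>} t * usage_kernel k T (t, past k \<omega>))"
proof -
  obtain k where k: "prev_arrival k \<omega> < t" "t < a k \<omega>"
    using interarrival_interval_ex[OF w t(1)] t(3) by auto
  have "ennreal (x t \<omega>) * mean_min_usage L \<le> ennreal (x t \<omega>) * mean_min_usage (T - t)"
    using t by (intro mult_left_mono mean_min_usage_mono) auto
  also have "\<dots> = indicator {prev_arrival k \<omega><..<a k \<omega>} t * usage_kernel k T (t, past k \<omega>)"
    using k t L policy_on_past_clip[OF regular_paths_pos_gap[OF w] k(1)] by (simp add: usage_kernel_def)
  also have "\<dots> \<le> (\<Sum>k. indicator {prev_arrival k \<omega><..<a k \<omega>} t * usage_kernel k T (t, past k \<omega>))"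
  proof -
    have "(\<Sum>i\<in>{k}. indicator {prev_arrival i \<omega><..<a i \<omega>} t * usage_kernel i T (t, past i \<omega>))
      \<le> (\<Sum>k. indicator {prev_arrival k \<omega><..<a k \<omega>} t * usage_kernel k T (t, past k \<omega>))"
      by (rule sum_le_suminf) (auto intro: summableI)
    then show ?thesis
      by (metis (no_types, lifting) sum.empty sum.insert_remove finite.emptyI empty_Diff add.right_neutral)
  qed
  finally show ?thesis .
qed

lemma expected_admission_usage_le:
  assumes T: "0 \<le> T" and L: "0 \<le> L"
  shows "lam * (\<integral>\<^sup>+\<omega>. (\<integral>\<^sup>+t. indicator {0<..<T-L} t * ennreal (x t \<omega>) * mean_min_usage L \<partial>lborel) \<partial>M)
         \<le> of_nat c * ennreal T"
proof -
  let ?I = "\<lambda>k \<omega> t. indicator {prev_arrival k \<omega><..<a k \<omega>} t * usage_kernel k T (t, past k \<omega>)"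
  have "lam * (\<integral>\<^sup>+\<omega>. (\<integral>\<^sup>+t. indicator {0<..<T-L} t * ennreal (x t \<omega>) * mean_min_usage L \<partial>lborel) \<partial>M)
      \<le> lam * (\<integral>\<^sup>+\<omega>. (\<integral>\<^sup>+t. (\<Sum>k. ?I k \<omega> t) \<partial>lborel) \<partial>M)"
  proof (intro mult_left_mono nn_integral_mono_AE)
    show "AE \<omega> in M. (\<integral>\<^sup>+t. indicator {0<..<T-L} t * ennreal (x t \<omega>) * mean_min_usage L \<partial>lborel) \<le>
                   (\<integral>\<^sup>+t. (\<Sum>k. ?I k \<omega> t) \<partial>lborel)"
    proof (rule AE_mp[OF AE_regular_paths AE_I2], rule impI, rule nn_integral_mono_AE)
      fix \<omega> assume w: "\<omega> \<in> regular_paths"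
      have "AE t in lborel. t \<notin> range (\<lambda>k. a k \<omega>)"
        by (intro AE_not_in countable_imp_null_set_lborel) auto
      then show "AE t in lborel. indicator {0<..<T-L} t * ennreal (x t \<omega>) * mean_min_usage L \<le> (\<Sum>k. ?I k \<omega> t)"
      proof eventually_elim
        case (elim t)
        show ?case
          by (cases "0 < t \<and> t < T - L") (use x_le_usage_kernel_sum[OF w L _ _ elim] in auto)
      qed
    qed
  qed simp
  also have "(\<integral>\<^sup>+\<omega>. (\<integral>\<^sup>+t. (\<Sum>k. ?I k \<omega> t) \<partial>lborel) \<partial>M) = (\<Sum>k. \<integral>\<^sup>+\<omega>. (\<integral>\<^sup>+t. ?I k \<omega> t \<partial>lborel) \<partial>M)"
    by (subst nn_integral_suminf[symmetric])
       (auto intro!: nn_integral_cong nn_integral_suminf measurable_interarrival_integral usage_kernel_section_measurable)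
  also have "lam * \<dots> = (\<Sum>k. \<integral>\<^sup>+\<omega>. usage_on_past T k \<omega> \<partial>M)"
    by (simp add: expected_usage_on_past)
  also have "\<dots> = (\<integral>\<^sup>+\<omega>. (\<Sum>k. usage_in T k \<omega>) \<partial>M)"
    by (subst nn_integral_suminf[symmetric], simp)
       (intro nn_integral_cong_AE, use AE_pos_gap_paths in \<open>auto elim!: AE_mp simp: usage_on_past_eq\<close>)
  also have "\<dots> \<le> (\<integral>\<^sup>+\<omega>. of_nat c * ennreal T \<partial>M)"
    by (rule nn_integral_mono_AE, rule AE_mp[OF AE_regular_paths AE_I2]) (auto intro: sum_usage_in_le[OF _ T])
  also have "\<dots> = of_nat c * ennreal T"
    using emeasure_space_1 by simp
  finally show ?thesis .
qed

text \<open>The policy is constrained only on \<open>[0, \<infinity>) \<times> \<Omega>\<close>, where the predictable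
\<open>\<sigma>\<close>-algebra lives; extended by \<open>0\<close> it becomes measurable for \<open>borel \<Otimes> M\<close>.\<close>

definition x_ext :: "real \<times> 'a \<Rightarrow> real" where
  "x_ext p = (if p \<in> {0..} \<times> space M then x (fst p) (snd p) else 0)"

lemma x_ext_measurable[measurable]: "x_ext \<in> borel_measurable (borel \<Otimes>\<^sub>M M)"
proof -
  let ?R = "restrict_space (borel \<Otimes>\<^sub>M M) ({0::real..} \<times> space M)"
  have sp: "({0::real..} \<times> space M) \<inter> space (borel \<Otimes>\<^sub>M M) \<in> sets (borel \<Otimes>\<^sub>M M)"
  proof -
    have "({0::real..} \<times> space M) \<inter> space (borel \<Otimes>\<^sub>M M) = {0..} \<times> space M" by (auto simp: space_pair_measure)
    moreover have "{0::real..} \<times> space M \<in> sets (borel \<Otimes>\<^sub>M M)" by (intro pair_measureI) (auto intro: borel_closed[OF closed_atLeast])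
    ultimately show ?thesis by simp
  qed
  have "sets predictable_history \<subseteq> sets ?R"
  proof
    fix E assume E: "E \<in> sets predictable_history"
    then have "E \<subseteq> {0..} \<times> space M" using sets.sets_into_space[OF E] by (simp add: space_predictable)
    then show "E \<in> sets ?R" using sets_predictable_subset E sets_restrict_space_iff[OF sp] by auto
  qed
  moreover have "space predictable_history = space ?R" by (auto simp: space_predictable space_restrict_space space_pair_measure)
  ultimately have "measurable predictable_history borel \<subseteq> measurable ?R borel"
    by (intro measurable_mono) auto
  then have "(\<lambda>(t, \<omega>). x t \<omega>) \<in> borel_measurable ?R" using x_measurable by blast
  then have "(\<lambda>p. if p \<in> {0::real..} \<times> space M then (\<lambda>(t, \<omega>). x t \<omega>) p else 0) \<in> borel_measurable (borel \<Otimes>\<^sub>M M)"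
    by (subst measurable_restrict_space_iff[OF sp, symmetric]) auto
  moreover have "x_ext = (\<lambda>p. if p \<in> {0::real..} \<times> space M then (\<lambda>(t, \<omega>). x t \<omega>) p else 0)"
    by (auto simp: x_ext_def fun_eq_iff)
  ultimately show ?thesis by simp
qed

lemma x_ext_section_measurable: "\<omega> \<in> space M \<Longrightarrow> (\<lambda>t. x_ext (t, \<omega>)) \<in> borel_measurable borel"
  using measurable_compose[OF measurable_Pair2' x_ext_measurable] by blast

lemma x_ext_eq: "0 \<le> t \<Longrightarrow> \<omega> \<in> space M \<Longrightarrow> x_ext (t, \<omega>) = x t \<omega>"
  by (simp add: x_ext_def)

lemma x_ext_bounds: "0 \<le> x_ext p \<and> x_ext p \<le> 1"
  using x_bounds by (auto simp: x_ext_def)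

lemma measurable_x_ext_integral:
  "(\<lambda>\<omega>. \<integral>\<^sup>+t. indicator I t * ennreal (x_ext (t, \<omega>)) \<partial>lborel) \<in> borel_measurable M" if "I \<in> sets borel"
proof (rule lborel.borel_measurable_nn_integral)
  have "(\<lambda>q::'a \<times> real. indicator I (snd q) * ennreal (x_ext (snd q, fst q))) \<in> borel_measurable (M \<Otimes>\<^sub>M borel)"
    using that by measurable
  then show "(\<lambda>(\<omega>, t). indicator I t * ennreal (x_ext (t, \<omega>))) \<in> borel_measurable (M \<Otimes>\<^sub>M lborel)"
    by (simp add: measurable_pair_lborel_iff split_beta')
qed

definition admitted_time :: "real \<Rightarrow> 'a \<Rightarrow> ennreal" where
  "admitted_time I \<omega> = (\<integral>\<^sup>+t. indicator {0..I} t * ennreal (x_ext (t, \<omega>)) \<partial>lborel)"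

lemma admitted_time_le:
  assumes "0 \<le> T" shows "admitted_time T \<omega> \<le> ennreal T"
proof -
  have "admitted_time T \<omega> \<le> (\<integral>\<^sup>+t. indicator {0..T} t \<partial>lborel)"
    unfolding admitted_time_def using x_ext_bounds
    by (intro nn_integral_mono) (auto simp: indicator_def ennreal_leI)
  then show ?thesis using assms by simp
qed

lemma admitted_time_measurable[measurable]: "admitted_time T \<in> borel_measurable M"
  unfolding admitted_time_def[abs_def] by (rule measurable_x_ext_integral) simp

lemma expected_admitted_time_le_T: "0 \<le> T \<Longrightarrow> (\<integral>\<^sup>+\<omega>. admitted_time T \<omega> \<partial>M) \<le> ennreal T"
  using nn_integral_mono[of M "admitted_time T" "\<lambda>_. ennreal T"] admitted_time_le emeasure_space_1 by simp

lemma admitted_time_le_split: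
  assumes w: "\<omega> \<in> space M" and L: "0 \<le> L"
  shows "admitted_time T \<omega> \<le> (\<integral>\<^sup>+t. indicator {0<..<T-L} t * ennreal (x_ext (t, \<omega>)) \<partial>lborel) + ennreal L"
proof -
  have [measurable]: "(\<lambda>t. x_ext (t, \<omega>)) \<in> borel_measurable borel" by (rule x_ext_section_measurable[OF w])
  have "admitted_time T \<omega> \<le> (\<integral>\<^sup>+t. indicator {0<..<T-L} t * ennreal (x_ext (t, \<omega>)) + (indicator {T-L..T} t + indicator {0} t) \<partial>lborel)"
    unfolding admitted_time_def
  proof (rule nn_integral_mono)
    fix t
    have e1: "ennreal (x_ext (t, \<omega>)) \<le> 1" using x_ext_bounds[of "(t, \<omega>)"] by (simp add: ennreal_leI)
    show "indicator {0..T} t * ennreal (x_ext (t, \<omega>)) \<le>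
      indicator {0<..<T-L} t * ennreal (x_ext (t, \<omega>)) + (indicator {T-L..T} t + indicator {0} t)"
    proof (cases "t \<in> {0..T}")
      case True
      then consider "t \<in> {0<..<T-L}" | "t \<in> {T-L..T}" | "t = 0" by fastforce
      then show ?thesis
        by cases (use True e1 in \<open>simp_all add: add_increasing add_increasing2\<close>)
    qed simp
  qed
  also have "\<dots> = (\<integral>\<^sup>+t. indicator {0<..<T-L} t * ennreal (x_ext (t, \<omega>)) \<partial>lborel) + ennreal L"
    using L by (simp add: nn_integral_add)
  finally show ?thesis .
qed

lemma expected_admitted_time_bound:
  assumes T: "0 \<le> T" and L: "0 \<le> L"
  shows "lam * mean_min_usage L * (\<integral>\<^sup>+\<omega>. admitted_time T \<omega> \<partial>M) \<le> of_nat c * ennreal T + lam * mean_min_usage L * ennreal L"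
proof -
  let ?X = "\<lambda>\<omega>. \<integral>\<^sup>+t. indicator {0<..<T-L} t * ennreal (x_ext (t, \<omega>)) \<partial>lborel"
  have "(\<integral>\<^sup>+\<omega>. admitted_time T \<omega> \<partial>M) \<le> (\<integral>\<^sup>+\<omega>. ?X \<omega> + ennreal L \<partial>M)"
    by (intro nn_integral_mono admitted_time_le_split L)
  also have "\<dots> = (\<integral>\<^sup>+\<omega>. ?X \<omega> \<partial>M) + ennreal L"
    using emeasure_space_1 by (subst nn_integral_add) (auto intro: measurable_x_ext_integral)
  finally have 1: "lam * mean_min_usage L * (\<integral>\<^sup>+\<omega>. admitted_time T \<omega> \<partial>M) \<le>
      lam * mean_min_usage L * (\<integral>\<^sup>+\<omega>. ?X \<omega> \<partial>M) + lam * mean_min_usage L * ennreal L"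
    by (subst distrib_left[symmetric]) (rule mult_left_mono, auto)
  have "lam * mean_min_usage L * (\<integral>\<^sup>+\<omega>. ?X \<omega> \<partial>M) = lam * (\<integral>\<^sup>+\<omega>. mean_min_usage L * ?X \<omega> \<partial>M)"
    by (subst nn_integral_cmult) (auto intro: measurable_x_ext_integral simp: mult.assoc)
  also have "\<dots> = lam * (\<integral>\<^sup>+\<omega>. (\<integral>\<^sup>+t. indicator {0<..<T-L} t * ennreal (x t \<omega>) * mean_min_usage L \<partial>lborel) \<partial>M)"
  proof (intro arg_cong2[where f="(*)"] refl nn_integral_cong)
    fix \<omega> assume w: "\<omega> \<in> space M"
    have [measurable]: "(\<lambda>t. x_ext (t, \<omega>)) \<in> borel_measurable borel" by (rule x_ext_section_measurable[OF w])
    have "mean_min_usage L * ?X \<omega> = (\<integral>\<^sup>+t. mean_min_usage L * (indicator {0<..<T-L} t * ennreal (x_ext (t, \<omega>))) \<partial>lborel)"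
      by (subst nn_integral_cmult) auto
    also have "\<dots> = (\<integral>\<^sup>+t. indicator {0<..<T-L} t * ennreal (x t \<omega>) * mean_min_usage L \<partial>lborel)"
      using w by (intro nn_integral_cong) (auto simp: indicator_def x_ext_eq mult_ac)
    finally show "mean_min_usage L * ?X \<omega> = (\<integral>\<^sup>+t. indicator {0<..<T-L} t * ennreal (x t \<omega>) * mean_min_usage L \<partial>lborel)" .
  qed
  also have "\<dots> \<le> of_nat c * ennreal T" by (rule expected_admission_usage_le[OF T L])
  finally show ?thesis using 1 by (meson add_right_mono order_trans)
qed

lemma expected_admitted_time_le:
  assumes L: "0 \<le> L" and LT: "L \<le> T" and mL: "0 < enn2real (mean_min_usage L)"
  shows "enn2real (\<integral>\<^sup>+\<omega>. admitted_time T \<omega> \<partial>M) \<le> real c * T / (lam * enn2real (mean_min_usage L)) + L"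
proof -
  have T: "0 \<le> T" using L LT by linarith
  define EY where "EY = enn2real (\<integral>\<^sup>+\<omega>. admitted_time T \<omega> \<partial>M)"
  define m where "m = enn2real (mean_min_usage L)"
  have E_fin: "(\<integral>\<^sup>+\<omega>. admitted_time T \<omega> \<partial>M) < top" using expected_admitted_time_le_T[OF T] by (metis ennreal_less_top le_less_trans)
  have E_eq: "(\<integral>\<^sup>+\<omega>. admitted_time T \<omega> \<partial>M) = ennreal EY" using E_fin by (simp add: EY_def ennreal_enn2real_if)
  have m_eq: "mean_min_usage L = ennreal m"
  proof -
    have "mean_min_usage L < top" by (rule mean_min_usage_finite)
    then show ?thesis by (simp add: m_def ennreal_enn2real_if)
  qed
  have m0: "0 < m" using mL by (simp add: m_def)
  have EY0: "0 \<le> EY" by (simp add: EY_def)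
  have h1: "ennreal lam * ennreal m * ennreal EY = ennreal (lam * m * EY)"
    using lam m0 EY0 by (simp add: ennreal_mult)
  have h2: "of_nat c * ennreal T + ennreal lam * ennreal m * ennreal L = ennreal (real c * T + lam * m * L)"
    using lam m0 L T by (simp add: ennreal_mult ennreal_plus ennreal_of_nat_eq_real_of_nat)
  have "ennreal (lam * m * EY) \<le> ennreal (real c * T + lam * m * L)"
    using expected_admitted_time_bound[OF T L] unfolding E_eq m_eq h1 h2 .
  then have "lam * m * EY \<le> real c * T + lam * m * L"
    using lam m0 L T by (subst (asm) ennreal_le_iff) auto
  then have "EY \<le> (real c * T + lam * m * L) / (lam * m)"
    using lam m0 by (simp add: pos_le_divide_eq mult_ac)
  also have "\<dots> = real c * T / (lam * m) + L"
    using lam m0 by (simp add: add_divide_distrib)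
  finally show ?thesis by (simp add: EY_def m_def)
qed

end

subsection \<open>The bound on the average reward\<close>

locale concave_reward = admission_policy M lam gap U S c x G for M :: "'a measure" and lam gap U S c x G +
  fixes g :: "real \<Rightarrow> real" and d :: real
  assumes G0: "measure G {..0} = 0"
    and g_concave: "concave_on {0..1} g" and g_mono: "mono_on {0..1} g"
    and g_cont: "continuous_on {0..1} g" and g0: "g 0 = 0"
    and d_int: "integrable G (\<lambda>s. s)" and d_eq: "d = integral\<^sup>L G (\<lambda>s. s)" and d_pos: "d > 0"
    and xstar: "real c / (lam * d) < 1"
begin

lemma AE_G_pos: "AE s in G. 0 < s"
proof -
  interpret G: prob_space G by (rule G_prob)
  have sets: "{..0::real} \<in> sets G" by (simp add: G_sets)
  have "emeasure G {..0} = 0" using G0 sets by (simp add: G.emeasure_eq_measure)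
  then show ?thesis using sets by (intro AE_I[where N="{..0}"]) auto
qed

lemma nn_integral_G_id: "(\<integral>\<^sup>+s. ennreal s \<partial>G) = ennreal d"
proof -
  have "(\<integral>\<^sup>+s. ennreal s \<partial>G) = ennreal (integral\<^sup>L G (\<lambda>s. s))"
    using AE_G_pos by (intro nn_integral_eq_integral d_int) (auto elim: AE_mp)
  then show ?thesis by (simp add: d_eq)
qed

lemma mean_min_usage_approx:
  assumes "m < d"
  shows "\<exists>n::nat. ennreal m < mean_min_usage (real n)"
proof -
  have meas: "(\<lambda>s. ennreal (min s (real n))) \<in> borel_measurable G" for n
    by (simp add: measurable_cong_sets[OF G_sets refl])
  have "(SUP n::nat. mean_min_usage (real n)) = (\<integral>\<^sup>+s. (SUP n::nat. ennreal (min s (real n))) \<partial>G)"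
    unfolding mean_min_usage_def
    by (rule nn_integral_monotone_convergence_SUP[symmetric])
       (auto simp: incseq_def le_fun_def intro!: ennreal_leI meas)
  also have "\<dots> = ennreal d" by (simp add: SUP_ennreal_min_real_nat nn_integral_G_id)
  finally have "ennreal m < (SUP n::nat. mean_min_usage (real n))"
    using assms d_pos by (cases "0 \<le> m") (auto simp: ennreal_lessI ennreal_neg)
  then show ?thesis by (simp add: less_SUP_iff)
qed

lemma exists_mean_min_usage_close:
  assumes \<epsilon>: "0 < \<epsilon>"
  obtains L where "0 \<le> L" "0 < enn2real (mean_min_usage L)" "1 / enn2real (mean_min_usage L) \<le> 1 / d + \<epsilon>"
proof -
  define m0 where "m0 = 1 / (1 / d + \<epsilon>)"
  have s0: "0 < 1 / d + \<epsilon>" using \<epsilon> d_pos by (simp add: add_pos_pos)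
  have m0pos: "0 < m0" using s0 by (simp add: m0_def)
  have "1 / (1 / d + \<epsilon>) < 1 / (1 / d)"
    using d_pos s0 \<epsilon> by (intro divide_strict_left_mono) simp_all
  then have "m0 < d" by (simp add: m0_def)
  then obtain n :: nat where n: "ennreal m0 < mean_min_usage (real n)" using mean_min_usage_approx by blast
  define mL where "mL = enn2real (mean_min_usage (real n))"
  have "ennreal m0 < ennreal mL"
    using n mean_min_usage_finite[of "real n"] by (simp add: mL_def)
  then have m0mL: "m0 < mL" using m0pos by (subst (asm) ennreal_less_iff) auto
  have mLpos: "0 < mL" using m0mL m0pos by linarith
  have "1 / mL \<le> 1 / m0" using m0mL m0pos by (intro divide_left_mono) auto
  then have "1 / mL \<le> 1 / d + \<epsilon>" using s0 by (simp add: m0_def)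
  then show ?thesis using that[of "real n"] mLpos by (simp add: mL_def)
qed

lemma FLU_eq: "FLU lam d c g = lam * g (real c / (lam * d))"
proof -
  let ?xs = "real c / (lam * d)"
  have xs: "0 \<le> ?xs" "?xs \<le> 1" using xstar lam d_pos by auto
  have in_set: "y \<in> {y \<in> {0..1}. lam * y * d \<le> real c} \<longleftrightarrow> 0 \<le> y \<and> y \<le> 1 \<and> y \<le> ?xs" for y
    using lam d_pos by (auto simp: pos_le_divide_eq mult_ac)
  show ?thesis unfolding FLU_def
  proof (rule cSup_eq_maximum)
    show "lam * g ?xs \<in> (\<lambda>y. lam * g y) ` {y \<in> {0..1}. lam * y * d \<le> real c}"
      using in_set[of ?xs] xs by auto
  next
    fix z assume "z \<in> (\<lambda>y. lam * g y) ` {y \<in> {0..1}. lam * y * d \<le> real c}"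
    then obtain y where y: "0 \<le> y" "y \<le> 1" "y \<le> ?xs" and z: "z = lam * g y" using in_set by auto
    have "g y \<le> g ?xs" using g_mono y xs unfolding mono_on_def by auto
    then show "z \<le> lam * g ?xs" using lam z by simp
  qed
qed

lemma g_nonneg: "0 \<le> y \<Longrightarrow> y \<le> 1 \<Longrightarrow> 0 \<le> g y"
  using g_mono g0 unfolding mono_on_def by (metis atLeastAtMost_iff order_refl zero_le_one)

lemma exists_chord_close:
  assumes q: "0 < q" "q < 1" and \<epsilon>: "0 < \<epsilon>"
  obtains p where "0 \<le> p" "p < q" "g q - g p < \<epsilon>"
proof -
  obtain \<delta> where \<delta>: "\<delta> > 0" "\<And>y. y \<in> {0..1} \<Longrightarrow> dist y q < \<delta> \<Longrightarrow> dist (g y) (g q) < \<epsilon>"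
    using g_cont q \<epsilon> unfolding continuous_on_iff by (metis atLeastAtMost_iff less_imp_le)
  define p where "p = q - min (\<delta> / 2) (q / 2)"
  have "0 \<le> p" "p < q" using \<delta>(1) q by (auto simp: p_def)
  moreover have "dist (g p) (g q) < \<epsilon>"
    using \<delta> q by (intro \<delta>(2)) (auto simp: p_def dist_real_def)
  ultimately show ?thesis using that by (auto simp: dist_real_def)
qed

definition chord_slope :: "real \<Rightarrow> real \<Rightarrow> real" where
  "chord_slope p q = (g q - g p) / (q - p)"

definition chord_offset :: "real \<Rightarrow> real \<Rightarrow> real" where
  "chord_offset p q = g q - chord_slope p q * q + (g q - g p)"

lemma g_le_chord_line:
  assumes "0 \<le> p" "p < q" "q \<le> 1" "0 \<le> y" "y \<le> 1"
  shows "g y \<le> chord_offset p q + chord_slope p q * y"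
proof -
  have "g y \<le> g q + chord_slope p q * (y - q) + (g q - g p)"
    using concave_mono_le_chord_line[OF g_concave g_mono assms] by (simp add: chord_slope_def)
  then show ?thesis by (simp add: chord_offset_def algebra_simps)
qed

lemma chord_slope_nonneg: "0 \<le> p \<Longrightarrow> p < q \<Longrightarrow> q \<le> 1 \<Longrightarrow> 0 \<le> chord_slope p q"
  using g_mono unfolding chord_slope_def mono_on_def by (auto intro!: divide_nonneg_pos)

lemma chord_offset_nonneg: "0 \<le> p \<Longrightarrow> p < q \<Longrightarrow> q \<le> 1 \<Longrightarrow> 0 \<le> chord_offset p q"
  using g_le_chord_line[of p q 0] g0 by simp

definition g_clip :: "real \<Rightarrow> real" where "g_clip y = g (max 0 (min 1 y))"

lemma g_clip_measurable[measurable]: "g_clip \<in> borel_measurable borel"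
proof -
  have "continuous_on UNIV (\<lambda>y::real. max 0 (min 1 y))" by (intro continuous_intros)
  moreover have "(\<lambda>y::real. max 0 (min 1 y)) ` UNIV \<subseteq> {0..1}" by auto
  ultimately have "continuous_on UNIV g_clip" unfolding g_clip_def
    using continuous_on_compose2[OF g_cont] by blast
  then show ?thesis by (rule borel_measurable_continuous_onI)
qed

lemma g_clip_eq: "0 \<le> y \<Longrightarrow> y \<le> 1 \<Longrightarrow> g_clip y = g y"
  by (simp add: g_clip_def)

lemma reward_path_eq:
  assumes w: "\<omega> \<in> space M"
  shows "(\<integral>t\<in>{0..T}. lam * g (x t \<omega>) \<partial>lborel) = (\<integral>t. indicator {0..T} t * (lam * g_clip (x_ext (t, \<omega>))) \<partial>lborel)"
  unfolding set_lebesgue_integral_def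
  using w x_ext_bounds by (intro Bochner_Integration.integral_cong) (auto simp: indicator_def x_ext_eq g_clip_eq)

lemma reward_path_nonneg:
  assumes w: "\<omega> \<in> space M" shows "0 \<le> (\<integral>t\<in>{0..T}. lam * g (x t \<omega>) \<partial>lborel)"
proof -
  have "0 \<le> indicator {0..T} t * (lam * g_clip (x_ext (t, \<omega>)))" for t
    using x_ext_bounds[of "(t, \<omega>)"] lam g_nonneg by (auto simp: indicator_def g_clip_eq)
  then show ?thesis unfolding reward_path_eq[OF w] by (simp add: integral_nonneg)
qed

lemma reward_path_bound:
  assumes w: "\<omega> \<in> space M" and T: "0 \<le> T" and pq: "0 \<le> p" "p < q" "q \<le> 1"
  defines "\<mu> \<equiv> chord_slope p q" and "C \<equiv> chord_offset p q"
  shows "ennreal (\<integral>t\<in>{0..T}. lam * g (x t \<omega>) \<partial>lborel) \<le> ennreal (lam * C * T) + ennreal (lam * \<mu>) * admitted_time T \<omega>"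
proof -
  have C0: "0 \<le> C" and \<mu>0: "0 \<le> \<mu>"
    using chord_offset_nonneg[OF pq] chord_slope_nonneg[OF pq] by (simp_all add: C_def \<mu>_def)
  have [measurable]: "(\<lambda>t. x_ext (t, \<omega>)) \<in> borel_measurable borel" by (rule x_ext_section_measurable[OF w])
  let ?f = "\<lambda>t. indicator {0..T} t * (lam * g_clip (x_ext (t, \<omega>)))"
  have f0: "0 \<le> ?f t" for t
    using x_ext_bounds[of "(t, \<omega>)"] lam g_nonneg by (auto simp: indicator_def g_clip_eq)
  have "ennreal (\<integral>t\<in>{0..T}. lam * g (x t \<omega>) \<partial>lborel) = ennreal (enn2real (\<integral>\<^sup>+t. ennreal (?f t) \<partial>lborel))"
    unfolding reward_path_eq[OF w] using f0 by (subst integral_eq_nn_integral) auto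
  also have "\<dots> \<le> (\<integral>\<^sup>+t. ennreal (?f t) \<partial>lborel)"
    by (simp add: ennreal_enn2real_if)
  also have "\<dots> \<le> (\<integral>\<^sup>+t. ennreal (lam * C) * indicator {0..T} t + ennreal (lam * \<mu>) * (indicator {0..T} t * ennreal (x_ext (t, \<omega>))) \<partial>lborel)"
  proof (rule nn_integral_mono)
    fix t
    show "ennreal (?f t) \<le> ennreal (lam * C) * indicator {0..T} t + ennreal (lam * \<mu>) * (indicator {0..T} t * ennreal (x_ext (t, \<omega>)))"
    proof (cases "t \<in> {0..T}")
      case True
      have "?f t = lam * g (x_ext (t, \<omega>))" using True x_ext_bounds[of "(t, \<omega>)"] by (simp add: g_clip_eq)
      also have "\<dots> \<le> lam * (C + \<mu> * x_ext (t, \<omega>))"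
        using g_le_chord_line[OF pq] x_ext_bounds[of "(t, \<omega>)"] lam by (simp add: C_def \<mu>_def)
      finally have "ennreal (?f t) \<le> ennreal (lam * C + lam * \<mu> * x_ext (t, \<omega>))"
        by (intro ennreal_leI) (simp add: algebra_simps)
      also have "\<dots> = ennreal (lam * C) + ennreal (lam * \<mu>) * ennreal (x_ext (t, \<omega>))"
        using lam C0 \<mu>0 x_ext_bounds[of "(t, \<omega>)"] by (simp add: ennreal_plus ennreal_mult)
      finally show ?thesis using True by simp
    qed simp
  qed
  also have "\<dots> = ennreal (lam * C * T) + ennreal (lam * \<mu>) * admitted_time T \<omega>"
    unfolding admitted_time_def using T lam C0
    by (subst nn_integral_add) (auto simp: nn_integral_cmult ennreal_mult)
  finally show ?thesis .
qed

lemma expected_reward_bound: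
  assumes T: "0 \<le> T" and pq: "0 \<le> p" "p < q" "q \<le> 1"
  defines "\<mu> \<equiv> chord_slope p q" and "C \<equiv> chord_offset p q"
  shows "integral\<^sup>L M (\<lambda>\<omega>. \<integral>t\<in>{0..T}. lam * g (x t \<omega>) \<partial>lborel) \<le>
         lam * C * T + lam * \<mu> * enn2real (\<integral>\<^sup>+\<omega>. admitted_time T \<omega> \<partial>M)"
proof -
  have C0: "0 \<le> C" and \<mu>0: "0 \<le> \<mu>"
    using chord_offset_nonneg[OF pq] chord_slope_nonneg[OF pq] by (simp_all add: C_def \<mu>_def)
  have E_fin: "(\<integral>\<^sup>+\<omega>. admitted_time T \<omega> \<partial>M) < top"
    using expected_admitted_time_le_T[OF T] by (metis ennreal_less_top le_less_trans)
  let ?F = "\<lambda>\<omega>. \<integral>t\<in>{0..T}. lam * g (x t \<omega>) \<partial>lborel"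
  have "integral\<^sup>L M ?F \<le> enn2real (\<integral>\<^sup>+\<omega>. ennreal (?F \<omega>) \<partial>M)"
    by (rule integral_le_enn2real_nn_integral) (rule reward_path_nonneg)
  also have "\<dots> \<le> enn2real (\<integral>\<^sup>+\<omega>. ennreal (lam * C * T) + ennreal (lam * \<mu>) * admitted_time T \<omega> \<partial>M)"
  proof (rule enn2real_mono)
    show "(\<integral>\<^sup>+\<omega>. ennreal (?F \<omega>) \<partial>M) \<le> (\<integral>\<^sup>+\<omega>. ennreal (lam * C * T) + ennreal (lam * \<mu>) * admitted_time T \<omega> \<partial>M)"
      by (intro nn_integral_mono) (use reward_path_bound[OF _ T pq] in \<open>simp add: C_def \<mu>_def\<close>)
    show "(\<integral>\<^sup>+\<omega>. ennreal (lam * C * T) + ennreal (lam * \<mu>) * admitted_time T \<omega> \<partial>M) < top"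
      using E_fin emeasure_space_1 by (subst nn_integral_add) (auto simp: nn_integral_cmult ennreal_mult_less_top)
  qed
  also have "\<dots> = lam * C * T + lam * \<mu> * enn2real (\<integral>\<^sup>+\<omega>. admitted_time T \<omega> \<partial>M)"
    using E_fin lam C0 \<mu>0 T emeasure_space_1
    by (subst nn_integral_add) (auto simp: nn_integral_cmult enn2real_plus enn2real_mult ennreal_mult_less_top)
  finally show ?thesis .
qed

lemma average_reward_le:
  assumes pq: "0 \<le> p" "p < q" "q \<le> 1" and L: "0 \<le> L" "L \<le> T" "0 < T"
    and mL: "0 < enn2real (mean_min_usage L)"
  defines "\<mu> \<equiv> chord_slope p q" and "C \<equiv> chord_offset p q"
  shows "(1 / T) * integral\<^sup>L M (\<lambda>\<omega>. \<integral>t\<in>{0..T}. lam * g (x t \<omega>) \<partial>lborel) \<le>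
           lam * C + \<mu> * (real c / enn2real (mean_min_usage L)) + lam * \<mu> * L / T"
proof -
  let ?m = "enn2real (mean_min_usage L)"
  have \<mu>0: "0 \<le> \<mu>" using chord_slope_nonneg[OF pq] by (simp add: \<mu>_def)
  have "lam * \<mu> * enn2real (\<integral>\<^sup>+\<omega>. admitted_time T \<omega> \<partial>M) \<le> lam * \<mu> * (real c * T / (lam * ?m) + L)"
    using expected_admitted_time_le[OF L(1,2) mL] lam \<mu>0 by (intro mult_left_mono) auto
  moreover have "integral\<^sup>L M (\<lambda>\<omega>. \<integral>t\<in>{0..T}. lam * g (x t \<omega>) \<partial>lborel) \<le>
      lam * C * T + lam * \<mu> * enn2real (\<integral>\<^sup>+\<omega>. admitted_time T \<omega> \<partial>M)"
    unfolding \<mu>_def C_def by (rule expected_reward_bound[OF _ pq]) (use L in simp)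
  ultimately have "integral\<^sup>L M (\<lambda>\<omega>. \<integral>t\<in>{0..T}. lam * g (x t \<omega>) \<partial>lborel) \<le>
      lam * C * T + lam * \<mu> * (real c * T / (lam * ?m) + L)" by linarith
  then have "(1 / T) * integral\<^sup>L M (\<lambda>\<omega>. \<integral>t\<in>{0..T}. lam * g (x t \<omega>) \<partial>lborel) \<le>
      (1 / T) * (lam * C * T + lam * \<mu> * (real c * T / (lam * ?m) + L))"
    using L by (intro mult_left_mono) auto
  also have "\<dots> = lam * C + \<mu> * (real c / ?m) + lam * \<mu> * L / T"
    using L lam mL by (simp add: field_simps)
  finally show ?thesis .
qed

text \<open>Choose a chord ending at \<open>x*\<close> whose drop \<open>g x* - g p\<close> is small, then \<open>L\<close> with
\<open>E min(S, L)\<close> close to \<open>d\<close>, and finally \<open>T\<close> large compared with \<open>L\<close>; each choice costs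
at most \<open>e / 3\<close>.\<close>

lemma eventually_average_reward_le:
  assumes c0: "c > 0" and e: "e > 0"
  shows "eventually (\<lambda>T::real. (1 / T) * integral\<^sup>L M (\<lambda>\<omega>. \<integral>t\<in>{0..T}. lam * g (x t \<omega>) \<partial>lborel)
                      \<le> lam * g (real c / (lam * d)) + e) at_top"
proof -
  define q where "q = real c / (lam * d)"
  have q: "0 < q" "q < 1" using c0 lam d_pos xstar by (auto simp: q_def)
  obtain p where p: "0 \<le> p" "p < q" and gqp: "g q - g p < e / (3 * lam)"
    using exists_chord_close[OF q] e lam by (metis divide_pos_pos zero_less_numeral mult_pos_pos)
  have pq: "0 \<le> p" "p < q" "q \<le> 1" using p q by auto
  define \<mu> where "\<mu> = chord_slope p q"
  define C where "C = chord_offset p q"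
  have \<mu>0: "0 \<le> \<mu>" using chord_slope_nonneg[OF pq] by (simp add: \<mu>_def)
  have den: "0 < 3 * (\<mu> * real c + 1)" using \<mu>0 by (simp add: add_nonneg_pos)
  define \<eta> where "\<eta> = e / (3 * (\<mu> * real c + 1))"
  obtain L where L0: "0 \<le> L" and mL: "0 < enn2real (mean_min_usage L)"
    and mLd: "1 / enn2real (mean_min_usage L) \<le> 1 / d + \<eta>"
    using exists_mean_min_usage_close[of \<eta>] e den by (auto simp: \<eta>_def)
  have ii: "\<mu> * (real c / enn2real (mean_min_usage L)) \<le> \<mu> * (real c / d) + e / 3"
  proof -
    have "\<mu> * (real c / enn2real (mean_min_usage L)) \<le> \<mu> * (real c * (1 / d + \<eta>))"
      using mLd \<mu>0 by (intro mult_left_mono) (auto simp: divide_inverse intro: mult_left_mono)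
    also have "\<dots> = \<mu> * (real c / d) + (\<mu> * real c * e) / (3 * (\<mu> * real c + 1))"
      by (simp add: \<eta>_def algebra_simps)
    also have "(\<mu> * real c * e) / (3 * (\<mu> * real c + 1)) \<le> e / 3"
      using e by (intro pos_divide_le_eq[OF den, THEN iffD2]) (simp add: algebra_simps)
    finally show ?thesis by simp
  qed
  have lC: "lam * C = lam * g q - \<mu> * (real c / d) + lam * (g q - g p)"
    using lam d_pos by (simp add: C_def \<mu>_def chord_offset_def q_def field_simps)
  have i: "lam * (g q - g p) < e / 3" using gqp lam by (simp add: field_simps)
  have "\<forall>\<^sub>F T in at_top. max L 1 \<le> T \<and> 3 * lam * \<mu> * L / e \<le> T"
    by (intro eventually_conj eventually_ge_at_top)
  then show ?thesis
  proof eventually_elim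
    case (elim T)
    then have T: "L \<le> T" "0 < T" by auto
    have iii: "lam * \<mu> * L / T \<le> e / 3"
      using elim e T by (simp add: pos_divide_le_eq field_simps)
    have "(1 / T) * integral\<^sup>L M (\<lambda>\<omega>. \<integral>t\<in>{0..T}. lam * g (x t \<omega>) \<partial>lborel) \<le>
        lam * C + \<mu> * (real c / enn2real (mean_min_usage L)) + lam * \<mu> * L / T"
      using average_reward_le[OF pq L0 T mL] by (simp add: \<mu>_def C_def)
    then have "(1 / T) * integral\<^sup>L M (\<lambda>\<omega>. \<integral>t\<in>{0..T}. lam * g (x t \<omega>) \<partial>lborel) \<le> lam * g q + e"
      using lC i ii iii by linarith
    then show ?case by (simp only: q_def)
  qed
qed

lemma expected_reward_zero_capacity:
  assumes c0: "c = 0"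
  shows "integral\<^sup>L M (\<lambda>\<omega>. \<integral>t\<in>{0..T}. lam * g (x t \<omega>) \<partial>lborel) = 0"
proof (rule integral_eq_zero_AE)
  show "AE \<omega> in M. (\<integral>t\<in>{0..T}. lam * g (x t \<omega>) \<partial>lborel) = 0"
    using AE_regular_paths
  proof (rule AE_mp, intro AE_I2 impI)
    fix \<omega> assume w: "\<omega> \<in> regular_paths"
    have "\<forall>t\<ge>0. c \<le> busy gap U S x t \<omega> \<longrightarrow> x t \<omega> = 0" using w by (simp add: regular_paths_def)
    then have "\<forall>t\<ge>0. x t \<omega> = 0" using c0 by simp
    then have "(\<integral>t\<in>{0..T}. lam * g (x t \<omega>) \<partial>lborel) = (\<integral>t\<in>{0..T}. 0 \<partial>lborel)"
      using g0 by (intro set_lebesgue_integral_cong) auto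
    then show "(\<integral>t\<in>{0..T}. lam * g (x t \<omega>) \<partial>lborel) = 0"
      by (simp add: set_lebesgue_integral_def)
  qed
qed

lemma liminf_average_reward_le_FLU:
  "ereal (FLU lam d c g) \<ge>
     Liminf at_top (\<lambda>T::real. ereal ((1 / T) *
       integral\<^sup>L M (\<lambda>\<omega>. \<integral>t\<in>{0..T}. lam * g (x t \<omega>) \<partial>lborel)))"
proof -
  let ?R = "\<lambda>T::real. ereal ((1 / T) * integral\<^sup>L M (\<lambda>\<omega>. \<integral>t\<in>{0..T}. lam * g (x t \<omega>) \<partial>lborel))"
  have "Liminf at_top ?R \<le> Limsup at_top ?R"
    by (rule Liminf_le_Limsup) simp
  also have "\<dots> \<le> ereal (FLU lam d c g)"
  proof (cases "c = 0")
    case True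
    have R0: "?R T = ereal 0" for T unfolding expected_reward_zero_capacity[OF True] by simp
    have "FLU lam d c g = 0" unfolding FLU_eq using True g0 by simp
    then show ?thesis
      by (intro Limsup_bounded always_eventually allI) (simp only: R0 order_refl zero_ereal_def)
  next
    case False
    show ?thesis
    proof (rule ereal_le_epsilon2, rule Limsup_bounded)
      fix e :: real assume "0 < e"
      with False show "\<forall>\<^sub>F T in at_top. ?R T \<le> ereal (FLU lam d c g) + ereal e"
        by (auto simp: FLU_eq elim!: eventually_mono[OF eventually_average_reward_le])
    qed
  qed
  finally show ?thesis .
qed

end

theorem lemma1:
  fixes M :: "'a measure" and lam d :: real and c :: nat and g :: "real \<Rightarrow> real"
    and G :: "real measure" and gap U S :: "nat \<Rightarrow> 'a \<Rightarrow> real" and x :: "real \<Rightarrow> 'a \<Rightarrow> real"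
  assumes M: "prob_space M"
    and lam: "lam > 0"
    and g_concave: "concave_on {0..1} g" and g_mono: "mono_on {0..1} g"
    and g_cont: "continuous_on {0..1} g" and g0: "g 0 = 0"
    and G: "prob_space G" "sets G = sets borel" "measure G {..0} = 0"
    and d: "integrable G (\<lambda>s. s)" "d = integral\<^sup>L G (\<lambda>s. s)" "d > 0"
    and xstar: "real c / (lam * d) < 1"
    and gap_exp: "\<And>k. distributed M lborel (gap k) (exponential_density lam)"
    and U_unif: "\<And>k. distributed M lborel (U k) (indicator {0..1})"
    and S_dist: "\<And>k. S k \<in> borel_measurable M" "\<And>k. distr M borel (S k) = G"
    and indep: "prob_space.indep_vars M (\<lambda>_. borel)
                  (\<lambda>i. case i of Inl k \<Rightarrow> gap k | Inr (Inl k) \<Rightarrow> U k | Inr (Inr k) \<Rightarrow> S k) UNIV"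
    and policy: "feasible_policy M c gap U S x"
  shows "ereal (FLU lam d c g) \<ge>
           Liminf at_top (\<lambda>T::real. ereal ((1 / T) *
             integral\<^sup>L M (\<lambda>\<omega>. \<integral>t\<in>{0..T}. lam * g (x t \<omega>) \<partial>lborel)))"
proof -
  have U_meas: "\<And>k. U k \<in> borel_measurable M"
    using distributed_measurable[OF U_unif] by simp
  interpret concave_reward M lam gap U S c x G g d
    by (intro concave_reward.intro admission_policy.intro arrival_model.intro
        admission_policy_axioms.intro concave_reward_axioms.intro)
       (fact M lam gap_exp U_meas indep U_unif G S_dist policy g_concave g_mono g_cont g0 d xstar)+
  show ?thesis by (rule liminf_average_reward_le_FLU)
qed

end
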